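(* Suppose there exists a constant $C<\infty$ such that $E X^*_{2N}\le E X^*_N+C$ for every integer $N\ge1$. Then the whole sequence $\{X_N^*-E X_N^*\}_{N\ge1}$ is tight.
   Context: For an integer $N\ge 1$ let $V_N=(\{0,1,\dots,N\})^2\subset\mathbb Z^2$, $V_N^o=(\{1,\dots,N-1\})^2$, and $\partial V_N=V_N\setminus V_N^o$. Let $\{w_m\}_{m\ge0}$ be simple random walk on $\mathbb Z^2$ started in $V_N$, killed at $\tau=\min\{m: w_m\in\partial V_N\}$, and define the Green function $G_N(x,y)=E^x\big(\sum_{m=0}^{\tau}\mathbf 1_{\{w_m=y\}}\big)$ for $x,y\in V_N$ (with $E^x$ expectation for the walk started at $x$; in particular $G_N(x,y)=0$ if $x$ or $y\in\partial V_N$). The discrete Gaussian free field (GFF) on $V_N$ with Dirichlet boundary conditions is the centered Gaussian field $\{X^N_z\}_{z\in V_N}$ with covariance $E[X^N_xX^N_y]=G_N(x,y)$. Write $X_N^*=\max_{z\in V_N}X^N_z$. *)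

theory Defs
  imports "HOL-Probability.Probability"
begin

type_synonym site = "int \<times> int"

definition box :: "nat \<Rightarrow> site set" where
  "box N = {0..int N} \<times> {0..int N}"

definition box_int :: "nat \<Rightarrow> site set" where
  "box_int N = {1..int N - 1} \<times> {1..int N - 1}"

definition adj :: "site \<Rightarrow> site \<Rightarrow> bool" where
  "adj x y \<longleftrightarrow> \<bar>fst x - fst y\<bar> + \<bar>snd x - snd y\<bar> = 1"

text \<open>One-step transition kernel of simple random walk killed upon hitting the boundary,
  restricted to interior sites.\<close>
definition kill_kernel :: "nat \<Rightarrow> site \<Rightarrow> site \<Rightarrow> real" where
  "kill_kernel N x y = (if x \<in> box_int N \<and> y \<in> box_int N \<and> adj x y then 1/4 else 0)"

text \<open>kill_pow N m x y = P^x(w_m = y and w_0,...,w_m all in the interior), for interior y.\<close>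
fun kill_pow :: "nat \<Rightarrow> nat \<Rightarrow> site \<Rightarrow> site \<Rightarrow> real" where
  "kill_pow N 0 x y = (if x = y then 1 else 0)"
| "kill_pow N (Suc m) x y = (\<Sum>z\<in>box_int N. kill_kernel N x z * kill_pow N m z y)"

text \<open>Green function G_N(x,y) = E^x (sum_{m=0}^{tau} 1{w_m = y}), which equals
  sum_m P^x(w_m = y, m < tau) for interior y; set to 0 when x or y is on the boundary.\<close>
definition green :: "nat \<Rightarrow> site \<Rightarrow> site \<Rightarrow> real" where
  "green N x y = (if x \<in> box_int N \<and> y \<in> box_int N then (\<Sum>m. kill_pow N m x y) else 0)"

definition centered_gaussian_field ::
  "'a measure \<Rightarrow> 'i set \<Rightarrow> ('i \<Rightarrow> 'a \<Rightarrow> real) \<Rightarrow> ('i \<Rightarrow> 'i \<Rightarrow> real) \<Rightarrow> bool" where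
  "centered_gaussian_field M V X K \<longleftrightarrow>
     prob_space M \<and> (\<forall>z\<in>V. X z \<in> borel_measurable M) \<and>
     (\<forall>t :: 'i \<Rightarrow> real.
        (CLINT \<omega>|M. iexp (\<Sum>z\<in>V. t z * X z \<omega>))
          = complex_of_real (exp (- (\<Sum>x\<in>V. \<Sum>y\<in>V. t x * t y * K x y) / 2)))"

definition is_dgff :: "'a measure \<Rightarrow> nat \<Rightarrow> (site \<Rightarrow> 'a \<Rightarrow> real) \<Rightarrow> bool" where
  "is_dgff M N X \<longleftrightarrow> centered_gaussian_field M (box N) X (green N)"

definition field_max :: "nat \<Rightarrow> (site \<Rightarrow> 'a \<Rightarrow> real) \<Rightarrow> 'a \<Rightarrow> real" where
  "field_max N X \<omega> = Max ((\<lambda>z. X z \<omega>) ` box N)"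

end

theory Submission
  imports Defs
begin

(* Split V_2N into the two disjoint interior boxes A = V_N^o and B = V_N^o + (N,0)
   and the remaining sites S.  The Gibbs-Markov property of the Gaussian field says
   that X^{2N} restricted to A u B has the same law as
       (two independent copies of X^N on A and on B) + (a centred field depending
        only on an independent copy of X^{2N} restricted to S),
   because the Green function G_{2N} on A u B splits, via a Schur-complement
   identity, into G_N + G_N(shifted) + a term that only involves G_{2N} on S.
   Jensen's inequality (the added field has mean zero) then gives
       E max(Y, Y') <= E X*_{2N} <= E X*_N + C,
   where Y, Y' are independent copies of X*_N.  Since max(a,b) = (a+b+|a-b|)/2
   this bounds E|Y - Y'|, hence E|X*_N - E X*_N| <= 2C, and Markov's inequality
   yields tightness.  *)

section \<open>Characteristic functions of real random variables\<close>

lemma char_distr_eq: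
  "prob_space P \<Longrightarrow> Y \<in> borel_measurable P \<Longrightarrow>
     char (distr P borel Y) t = (CLINT \<omega>|P. iexp (t * Y \<omega>))"
  unfolding char_def by (subst integral_distr) auto

lemma indicator_integral_eq_of_char_eq:
  assumes P: "prob_space P" and Y: "Y \<in> borel_measurable P"
    and Q: "prob_space Q" and Y': "Y' \<in> borel_measurable Q"
    and ch: "\<And>s. (CLINT \<omega>|P. iexp (s * Y \<omega>)) = (CLINT \<omega>|Q. iexp (s * Y' \<omega>))"
    and B: "B \<in> sets borel"
  shows "(\<integral>\<omega>. indicator B (Y \<omega>) \<partial>P) = (\<integral>\<omega>. indicator B (Y' \<omega>) \<partial>Q :: real)"
proof -
  have "distr P borel Y = distr Q borel Y'"
  proof (rule Levy_uniqueness)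
    show "real_distribution (distr P borel Y)"
      using Y by (intro prob_space.real_distribution_distr[OF P]) auto
    show "real_distribution (distr Q borel Y')"
      using Y' by (intro prob_space.real_distribution_distr[OF Q]) auto
    show "char (distr P borel Y) = char (distr Q borel Y')"
      using ch by (auto simp: char_distr_eq[OF P Y] char_distr_eq[OF Q Y'])
  qed
  moreover have "(\<integral>\<omega>. indicator B (Y \<omega>) \<partial>P) = (\<integral>x. indicator B x \<partial>distr P borel Y :: real)"
    using Y B by (intro integral_distr[symmetric]) auto
  moreover have "(\<integral>\<omega>. indicator B (Y' \<omega>) \<partial>Q) = (\<integral>x. indicator B x \<partial>distr Q borel Y' :: real)"
    using Y' B by (intro integral_distr[symmetric]) auto
  ultimately show ?thesis by simp
qed

lemma centered_normal_law:
  assumes P: "prob_space P" and Y: "Y \<in> borel_measurable P" and s: "\<sigma> \<ge> 0"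
    and ch: "\<And>t. (CLINT \<omega>|P. iexp (t * Y \<omega>)) = complex_of_real (exp (- (t*t*\<sigma>)/2))"
  shows "distr P borel Y = distr std_normal_distribution borel (\<lambda>x. sqrt \<sigma> * x)"
proof (rule Levy_uniqueness)
  interpret P: prob_space P by fact
  show "real_distribution (distr P borel Y)"
    by (simp add: P.real_distribution_distr Y)
  show "real_distribution (distr std_normal_distribution borel (\<lambda>x. sqrt \<sigma> * x))"
    by (rule prob_space.real_distribution_distr[OF prob_space_normal_density]) (simp, measurable)
  show "char (distr P borel Y) = char (distr std_normal_distribution borel (\<lambda>x. sqrt \<sigma> * x))"
  proof
    fix t
    have "char (distr std_normal_distribution borel (\<lambda>x. sqrt \<sigma> * x)) t
        = char std_normal_distribution (t * sqrt \<sigma>)"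
      unfolding char_def by (subst integral_distr) (auto simp: mult.assoc)
    also have "\<dots> = complex_of_real (exp (- (t*t*\<sigma>)/2))"
      using s by (simp add: char_std_normal_distribution power2_eq_square)
    finally show "char (distr P borel Y) t = char (distr std_normal_distribution borel (\<lambda>x. sqrt \<sigma> * x)) t"
      using char_distr_eq[OF P Y] ch by simp
  qed
qed

lemma centered_normal_props:
  assumes P: "prob_space P" and Y: "Y \<in> borel_measurable P" and s: "\<sigma> \<ge> 0"
    and ch: "\<And>t. (CLINT \<omega>|P. iexp (t * Y \<omega>)) = complex_of_real (exp (- (t*t*\<sigma>)/2))"
  shows "integrable P Y" "integral\<^sup>L P Y = 0" "\<sigma> = 0 \<Longrightarrow> AE \<omega> in P. Y \<omega> = 0"
proof -
  note law = centered_normal_law[OF assms]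
  have "integrable std_normal_distribution (\<lambda>x. sqrt \<sigma> * x)"
    using integrable_std_normal_distribution_moment[of 1] by simp
  then have "integrable (distr P borel Y) (\<lambda>x. x)"
    unfolding law by (subst integrable_distr_eq) auto
  then show "integrable P Y" using Y by (subst (asm) integrable_distr_eq) auto
  have "integral\<^sup>L P Y = integral\<^sup>L (distr P borel Y) (\<lambda>x. x)"
    using Y by (subst integral_distr) auto
  also have "\<dots> = integral\<^sup>L std_normal_distribution (\<lambda>x. sqrt \<sigma> * x)"
    unfolding law by (subst integral_distr) auto
  also have "\<dots> = 0" using integral_std_normal_distribution_moment_odd[of 1] by simp
  finally show "integral\<^sup>L P Y = 0" .
  assume "\<sigma> = 0"
  then have "AE x in distr P borel Y. x = 0" unfolding law
    by (subst AE_distr_iff) auto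
  then show "AE \<omega> in P. Y \<omega> = 0" using Y by (subst (asm) AE_distr_iff) auto
qed

section \<open>Finite-dimensional laws are determined by characteristic functions\<close>

text \<open>The library only provides Levy's uniqueness theorem on the real line.  The
  multivariate version is derived by induction on the dimension: conditioning on
  the event that one coordinate lies in a Borel set reduces the dimension, and the
  required one-dimensional uniqueness for the weighted laws is obtained by tilting
  with the positive weight 2 + cos.\<close>

lemma (in prob_space) integrable_bounded:
  fixes f :: "'a \<Rightarrow> real"
  shows "f \<in> borel_measurable M \<Longrightarrow> (\<And>x. \<bar>f x\<bar> \<le> B) \<Longrightarrow> integrable M f"
  by (rule integrable_const_bound[of _ B]) auto

lemma (in prob_space) integrable_iexp_real:
  "f \<in> borel_measurable M \<Longrightarrow> integrable M (\<lambda>x. iexp (f x))"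
  using integrable_iexp[of "\<lambda>x. complex_of_real (f x)"] by simp

text \<open>The probability space P reweighted by a nonnegative weight w, normalised by
  its mean; for an indicator weight this is conditioning on an event.\<close>

definition reweight :: "'a measure \<Rightarrow> ('a \<Rightarrow> real) \<Rightarrow> 'a measure" where
  "reweight P w = density P (\<lambda>\<omega>. ennreal (w \<omega> / integral\<^sup>L P w))"

lemma sets_reweight[simp]: "sets (reweight P w) = sets P"
  and space_reweight[simp]: "space (reweight P w) = space P"
  by (simp_all add: reweight_def)

lemma measurable_reweight[simp]: "measurable (reweight P w) N = measurable P N"
  by (rule measurable_cong_sets) simp_all

lemma integral_reweight:
  fixes f :: "'a \<Rightarrow> 'b::{banach, second_countable_topology}"
  assumes w[measurable]: "w \<in> borel_measurable P" and w0: "\<And>\<omega>. 0 \<le> w \<omega>"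
    and f: "f \<in> borel_measurable P"
  shows "integral\<^sup>L (reweight P w) f = (\<integral>\<omega>. w \<omega> *\<^sub>R f \<omega> \<partial>P) /\<^sub>R integral\<^sup>L P w"
proof -
  have "0 \<le> integral\<^sup>L P w" using w0 by simp
  then have "integral\<^sup>L (reweight P w) f = (\<integral>\<omega>. (w \<omega> / integral\<^sup>L P w) *\<^sub>R f \<omega> \<partial>P)"
    unfolding reweight_def using f w0 by (subst integral_density) auto
  also have "\<dots> = (\<integral>\<omega>. inverse (integral\<^sup>L P w) *\<^sub>R (w \<omega> *\<^sub>R f \<omega>) \<partial>P)"
    by (intro Bochner_Integration.integral_cong) (simp_all add: divide_inverse mult.commute)
  also have "\<dots> = (\<integral>\<omega>. w \<omega> *\<^sub>R f \<omega> \<partial>P) /\<^sub>R integral\<^sup>L P w"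
    by (rule integral_scaleR_right)
  finally show ?thesis .
qed

lemma prob_space_reweight:
  assumes P: "prob_space P" and w[measurable]: "w \<in> borel_measurable P"
    and w0: "\<And>\<omega>. 0 \<le> w \<omega>" and wb: "\<And>\<omega>. w \<omega> \<le> b" and pos: "0 < integral\<^sup>L P w"
  shows "prob_space (reweight P w)"
proof (rule prob_spaceI)
  interpret prob_space P by fact
  have "integrable P w" using w0 wb by (intro integrable_bounded[of _ b]) auto
  then have "(\<integral>\<^sup>+ \<omega>. ennreal (w \<omega> / integral\<^sup>L P w) \<partial>P) = ennreal (integral\<^sup>L P w / integral\<^sup>L P w)"
    using w0 pos by (subst nn_integral_eq_integral) auto
  moreover have "emeasure (reweight P w) (space P) = (\<integral>\<^sup>+ \<omega>. ennreal (w \<omega> / integral\<^sup>L P w) \<partial>P)"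
    unfolding reweight_def by (subst emeasure_density) (auto intro!: nn_integral_cong simp: indicator_def)
  ultimately show "emeasure (reweight P w) (space (reweight P w)) = 1"
    using pos by simp
qed

lemma cos_iexp_mult:
  "complex_of_real (cos (t + p)) * iexp a = (iexp p * iexp (a + t) + iexp (-p) * iexp (a - t)) / 2"
proof -
  have "complex_of_real (cos (t + p)) = (iexp (t+p) + iexp (-(t+p))) / 2"
    by (simp add: cos_exp_eq cos_of_real[symmetric] algebra_simps)
  moreover have "iexp p * iexp (a + t) = iexp (t + p) * iexp a"
    by (simp add: mult_exp_exp algebra_simps)
  moreover have "iexp (-p) * iexp (a - t) = iexp (-(t + p)) * iexp a"
    by (simp add: mult_exp_exp algebra_simps)
  ultimately show ?thesis
    by (simp add: algebra_simps add_divide_distrib)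
qed

lemma tilted_char:
  assumes P: "prob_space P" and A[measurable]: "A \<in> borel_measurable P"
    and th[measurable]: "\<theta> \<in> borel_measurable P"
  shows "(CLINT \<omega>|P. (2 + cos (\<theta> \<omega> + p)) *\<^sub>R iexp (s * A \<omega>))
    = 2 * (CLINT \<omega>|P. iexp (s * A \<omega> + 0 * \<theta> \<omega>))
      + (iexp p * (CLINT \<omega>|P. iexp (s * A \<omega> + 1 * \<theta> \<omega>))
         + iexp (-p) * (CLINT \<omega>|P. iexp (s * A \<omega> + (-1) * \<theta> \<omega>))) / 2"
proof -
  interpret prob_space P by fact
  define e where "e k \<omega> = iexp (s * A \<omega> + k * \<theta> \<omega>)" for k \<omega>
  have int: "integrable P (e k)" for k
    unfolding e_def by (rule integrable_iexp_real) measurable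
  have "(2 + cos (\<theta> \<omega> + p)) *\<^sub>R iexp (s * A \<omega>)
      = 2 * e 0 \<omega> + (iexp p * e 1 \<omega> + iexp (-p) * e (-1) \<omega>) / 2" for \<omega>
    using cos_iexp_mult[of "\<theta> \<omega>" p "s * A \<omega>"]
    by (simp add: e_def scaleR_conv_of_real distrib_right)
  then have "(CLINT \<omega>|P. (2 + cos (\<theta> \<omega> + p)) *\<^sub>R iexp (s * A \<omega>))
      = (CLINT \<omega>|P. 2 * e 0 \<omega> + (iexp p * e 1 \<omega> + iexp (-p) * e (-1) \<omega>) / 2)"
    by simp
  also have "\<dots> = 2 * integral\<^sup>L P (e 0) + (iexp p * integral\<^sup>L P (e 1) + iexp (-p) * integral\<^sup>L P (e (-1))) / 2"
    using int by (simp add: integral_add integrable_mult_right)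
  finally show ?thesis unfolding e_def .
qed

lemma tilt_bounds:
  fixes x :: real
  shows "0 \<le> 2 + cos x" "1 \<le> 2 + cos x" "2 + cos x \<le> 3"
  using cos_ge_minus_one[of x] cos_le_one[of x] by linarith+

text \<open>If (A, \<theta>) and (A', \<theta>') have the same joint characteristic functions at the
  frequencies (s, k), k \<in> {-1,0,1}, then the laws of A and A' tilted by
  2 + cos(\<theta> + p) resp. 2 + cos(\<theta>' + p) coincide: both tilted measures are
  probability measures with equal normalisation and equal characteristic functions.\<close>

lemma tilted_indicator_integral_eq:
  fixes p :: real
  assumes P: "prob_space P" and A[measurable]: "A \<in> borel_measurable P"
    and th[measurable]: "\<theta> \<in> borel_measurable P"
    and Q: "prob_space Q" and A'[measurable]: "A' \<in> borel_measurable Q"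
    and th'[measurable]: "\<theta>' \<in> borel_measurable Q"
    and eq: "\<And>s k. k \<in> {-1,0,1} \<Longrightarrow>
      (CLINT \<omega>|P. iexp (s * A \<omega> + k * \<theta> \<omega>)) = (CLINT \<omega>|Q. iexp (s * A' \<omega> + k * \<theta>' \<omega>))"
    and B: "B \<in> sets borel"
  shows "(\<integral>\<omega>. (2 + cos (\<theta> \<omega> + p)) * indicator B (A \<omega>) \<partial>P)
       = (\<integral>\<omega>. (2 + cos (\<theta>' \<omega> + p)) * indicator B (A' \<omega>) \<partial>Q)"
proof -
  interpret P: prob_space P by fact
  define w where "w \<omega> = 2 + cos (\<theta> \<omega> + p)" for \<omega>
  define w' where "w' \<omega> = 2 + cos (\<theta>' \<omega> + p)" for \<omega>
  have [measurable]: "w \<in> borel_measurable P" "w' \<in> borel_measurable Q"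
    unfolding w_def[abs_def] w'_def[abs_def] by measurable
  have w_bounds: "0 \<le> w \<omega>" "1 \<le> w \<omega>" "w \<omega> \<le> 3" for \<omega>
    unfolding w_def by (rule tilt_bounds)+
  have w'_bounds: "0 \<le> w' \<omega>" "w' \<omega> \<le> 3" for \<omega>
    unfolding w'_def by (rule tilt_bounds)+
  have tilt_eq: "(CLINT \<omega>|P. w \<omega> *\<^sub>R iexp (s * A \<omega>)) = (CLINT \<omega>|Q. w' \<omega> *\<^sub>R iexp (s * A' \<omega>))" for s
    unfolding w_def w'_def tilted_char[OF P A th] tilted_char[OF Q A' th']
    using eq[of 0 s] eq[of 1 s] eq[of "-1" s] by simp
  have "complex_of_real (integral\<^sup>L P w) = complex_of_real (integral\<^sup>L Q w')"
    using tilt_eq[of 0] by (simp add: scaleR_conv_of_real)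
  then have norm_eq: "integral\<^sup>L P w = integral\<^sup>L Q w'" by simp
  have "integral\<^sup>L P (\<lambda>_. 1) \<le> integral\<^sup>L P w"
    using w_bounds by (intro integral_mono P.integrable_bounded[of w 3]) auto
  then have pos: "0 < integral\<^sup>L P w" by (simp add: P.prob_space)
  have PW: "prob_space (reweight P w)" and QW: "prob_space (reweight Q w')"
    using pos norm_eq w_bounds w'_bounds
    by (auto intro!: prob_space_reweight[OF P, of _ 3] prob_space_reweight[OF Q, of _ 3])
  have "(\<integral>\<omega>. indicator B (A \<omega>) \<partial>reweight P w) = (\<integral>\<omega>. indicator B (A' \<omega>) \<partial>reweight Q w' :: real)"
  proof (rule indicator_integral_eq_of_char_eq[OF PW _ QW _ _ B])
    show "(CLINT \<omega>|reweight P w. iexp (s * A \<omega>)) = (CLINT \<omega>|reweight Q w'. iexp (s * A' \<omega>))" for s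
      using w_bounds w'_bounds tilt_eq[of s] norm_eq
      by (simp add: integral_reweight[of w P] integral_reweight[of w' Q])
  qed auto
  then show ?thesis
    using w_bounds w'_bounds norm_eq pos B
    by (simp add: integral_reweight[of w P] integral_reweight[of w' Q] w_def w'_def)
qed

lemma cos_weighted_law_eq:
  fixes p :: real
  assumes P: "prob_space P" and A[measurable]: "A \<in> borel_measurable P"
    and th[measurable]: "\<theta> \<in> borel_measurable P"
    and Q: "prob_space Q" and A'[measurable]: "A' \<in> borel_measurable Q"
    and th'[measurable]: "\<theta>' \<in> borel_measurable Q"
    and eq: "\<And>s k. k \<in> {-1,0,1} \<Longrightarrow>
      (CLINT \<omega>|P. iexp (s * A \<omega> + k * \<theta> \<omega>)) = (CLINT \<omega>|Q. iexp (s * A' \<omega> + k * \<theta>' \<omega>))"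
    and B: "B \<in> sets borel"
  shows "(\<integral>\<omega>. indicator B (A \<omega>) \<partial>P) = (\<integral>\<omega>. indicator B (A' \<omega>) \<partial>Q :: real)"
    and "(\<integral>\<omega>. cos (\<theta> \<omega> + p) * indicator B (A \<omega>) \<partial>P)
       = (\<integral>\<omega>. cos (\<theta>' \<omega> + p) * indicator B (A' \<omega>) \<partial>Q)"
proof -
  interpret P: prob_space P by fact
  interpret Q: prob_space Q by fact
  show law: "(\<integral>\<omega>. indicator B (A \<omega>) \<partial>P) = (\<integral>\<omega>. indicator B (A' \<omega>) \<partial>Q :: real)"
    using eq[of 0] by (intro indicator_integral_eq_of_char_eq[OF P A Q A' _ B]) simp
  have "integrable P (\<lambda>\<omega>. cos (\<theta> \<omega> + p) * indicator B (A \<omega>))"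
    and "integrable P (\<lambda>\<omega>. indicator B (A \<omega>) :: real)"
    using B by (auto intro!: P.integrable_bounded[of _ 1] simp: abs_mult indicator_def)
  moreover have "integrable Q (\<lambda>\<omega>. cos (\<theta>' \<omega> + p) * indicator B (A' \<omega>))"
    and "integrable Q (\<lambda>\<omega>. indicator B (A' \<omega>) :: real)"
    using B by (auto intro!: Q.integrable_bounded[of _ 1] simp: abs_mult indicator_def)
  ultimately show "(\<integral>\<omega>. cos (\<theta> \<omega> + p) * indicator B (A \<omega>) \<partial>P)
       = (\<integral>\<omega>. cos (\<theta>' \<omega> + p) * indicator B (A' \<omega>) \<partial>Q)"
    using law tilted_indicator_integral_eq[OF assms, of p] by (simp add: distrib_right integral_add)
qed

lemma char_conditioned:
  assumes P: "prob_space P" and A[measurable]: "A \<in> borel_measurable P"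
    and th[measurable]: "\<theta> \<in> borel_measurable P" and B[measurable]: "B \<in> sets borel"
  shows "(CLINT \<omega>|reweight P (\<lambda>\<omega>. indicator B (A \<omega>)). iexp (\<theta> \<omega>))
    = (complex_of_real (\<integral>\<omega>. cos (\<theta> \<omega> + 0) * indicator B (A \<omega>) \<partial>P)
       + \<i> * complex_of_real (\<integral>\<omega>. cos (\<theta> \<omega> + -(pi/2)) * indicator B (A \<omega>) \<partial>P))
      /\<^sub>R (\<integral>\<omega>. indicator B (A \<omega>) \<partial>P)"
proof -
  interpret prob_space P by fact
  define f where "f p \<omega> = cos (\<theta> \<omega> + p) * indicator B (A \<omega>)" for p \<omega>
  have int: "integrable P (f p)" for p
    unfolding f_def by (intro integrable_bounded[of _ 1]) (auto simp: abs_mult indicator_def)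
  have "indicator B (A \<omega>) *\<^sub>R iexp (\<theta> \<omega>)
      = complex_of_real (f 0 \<omega>) + \<i> * complex_of_real (f (-(pi/2)) \<omega>)" for \<omega>
  proof -
    have "iexp (\<theta> \<omega>) = complex_of_real (cos (\<theta> \<omega>)) + \<i> * complex_of_real (sin (\<theta> \<omega>))"
      by (simp add: cis_conv_exp[symmetric] cis.ctr Complex_eq)
    then show ?thesis
      by (simp add: f_def scaleR_conv_of_real cos_diff algebra_simps)
  qed
  then have "(CLINT \<omega>|P. indicator B (A \<omega>) *\<^sub>R iexp (\<theta> \<omega>))
      = (CLINT \<omega>|P. complex_of_real (f 0 \<omega>) + \<i> * complex_of_real (f (-(pi/2)) \<omega>))"
    by simp
  also have "\<dots> = complex_of_real (integral\<^sup>L P (f 0)) + \<i> * complex_of_real (integral\<^sup>L P (f (-(pi/2))))"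
    using int by (simp add: integral_add integrable_mult_right)
  finally show ?thesis
    unfolding f_def by (subst integral_reweight) auto
qed

lemma integral_indicator_mult_bounds:
  fixes Y :: "'a \<Rightarrow> real" and f :: "'a \<Rightarrow> real"
  assumes P: "prob_space P" and Y[measurable]: "Y \<in> borel_measurable P"
    and B[measurable]: "B \<in> sets borel" and f[measurable]: "f \<in> borel_measurable P"
    and f01: "\<And>\<omega>. 0 \<le> f \<omega> \<and> f \<omega> \<le> 1"
  shows "0 \<le> (\<integral>\<omega>. indicator B (Y \<omega>) * f \<omega> \<partial>P)"
    and "(\<integral>\<omega>. indicator B (Y \<omega>) * f \<omega> \<partial>P) \<le> (\<integral>\<omega>. indicator B (Y \<omega>) \<partial>P)"
proof -
  interpret prob_space P by fact
  show "0 \<le> (\<integral>\<omega>. indicator B (Y \<omega>) * f \<omega> \<partial>P)"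
    using f01 by (intro Bochner_Integration.integral_nonneg) simp
  show "(\<integral>\<omega>. indicator B (Y \<omega>) * f \<omega> \<partial>P) \<le> (\<integral>\<omega>. indicator B (Y \<omega>) \<partial>P)"
    using f01 by (intro integral_mono integrable_bounded[of _ 1])
      (auto simp: indicator_def abs_le_iff order_trans[OF zero_le_one])
qed

lemma sum_insert_update:
  fixes U :: "'i \<Rightarrow> 'a \<Rightarrow> real"
  assumes "finite F" "d \<notin> F"
  shows "(\<Sum>z\<in>insert d F. ((\<lambda>z. k * t z)(d := s)) z * U z \<omega>)
       = s * U d \<omega> + k * (\<Sum>z\<in>F. t z * U z \<omega>)"
proof -
  have "(\<Sum>z\<in>F. ((\<lambda>z. k * t z)(d := s)) z * U z \<omega>) = (\<Sum>z\<in>F. k * (t z * U z \<omega>))"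
    using assms by (intro sum.cong) (auto simp: mult.assoc)
  then show ?thesis using assms by (simp add: sum_distrib_left)
qed

lemma prod_indicator_bounds:
  "0 \<le> (\<Prod>z\<in>S. indicator (B z) (U z \<omega>) :: real) \<and> (\<Prod>z\<in>S. indicator (B z) (U z \<omega>) :: real) \<le> 1"
  by (auto intro: prod_nonneg prod_le_1 simp: indicator_def)

lemma conditioned_char_eq:
  assumes P: "prob_space P" and A[measurable]: "A \<in> borel_measurable P"
    and th[measurable]: "\<theta> \<in> borel_measurable P"
    and Q: "prob_space Q" and A'[measurable]: "A' \<in> borel_measurable Q"
    and th'[measurable]: "\<theta>' \<in> borel_measurable Q"
    and eq: "\<And>s k. k \<in> {-1,0,1} \<Longrightarrow>
      (CLINT \<omega>|P. iexp (s * A \<omega> + k * \<theta> \<omega>)) = (CLINT \<omega>|Q. iexp (s * A' \<omega> + k * \<theta>' \<omega>))"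
    and B: "B \<in> sets borel"
  shows "(CLINT \<omega>|reweight P (\<lambda>\<omega>. indicator B (A \<omega>)). iexp (\<theta> \<omega>))
       = (CLINT \<omega>|reweight Q (\<lambda>\<omega>. indicator B (A' \<omega>)). iexp (\<theta>' \<omega>))"
  unfolding char_conditioned[OF P A th B] char_conditioned[OF Q A' th' B]
  using cos_weighted_law_eq(1)[OF assms] cos_weighted_law_eq(2)[OF assms, of 0]
    cos_weighted_law_eq(2)[OF assms, of "-(pi/2)"] by simp

lemma indicator_mult_integral_eq:
  fixes Y f :: "'a \<Rightarrow> real" and Y' f' :: "'b \<Rightarrow> real"
  assumes P: "prob_space P" and Y[measurable]: "Y \<in> borel_measurable P"
    and Q: "prob_space Q" and Y'[measurable]: "Y' \<in> borel_measurable Q"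
    and B[measurable]: "B \<in> sets borel"
    and f[measurable]: "f \<in> borel_measurable P" and f': "f' \<in> borel_measurable Q"
    and f01: "\<And>\<omega>. 0 \<le> f \<omega> \<and> f \<omega> \<le> 1" and f'01: "\<And>\<omega>. 0 \<le> f' \<omega> \<and> f' \<omega> \<le> 1"
    and mass: "(\<integral>\<omega>. indicator B (Y \<omega>) \<partial>P) = (\<integral>\<omega>. indicator B (Y' \<omega>) \<partial>Q :: real)"
    and cond: "0 < (\<integral>\<omega>. indicator B (Y \<omega>) \<partial>P :: real) \<Longrightarrow>
      integral\<^sup>L (reweight P (\<lambda>\<omega>. indicator B (Y \<omega>))) f
        = integral\<^sup>L (reweight Q (\<lambda>\<omega>. indicator B (Y' \<omega>))) f'"
  shows "(\<integral>\<omega>. indicator B (Y \<omega>) * f \<omega> \<partial>P) = (\<integral>\<omega>. indicator B (Y' \<omega>) * f' \<omega> \<partial>Q)"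
proof -
  note boundsP = integral_indicator_mult_bounds[OF P Y B f f01]
  note boundsQ = integral_indicator_mult_bounds[OF Q Y' B f' f'01]
  have "0 \<le> (\<integral>\<omega>. indicator B (Y \<omega>) \<partial>P :: real)" by simp
  then consider "(\<integral>\<omega>. indicator B (Y \<omega>) \<partial>P :: real) = 0" | "0 < (\<integral>\<omega>. indicator B (Y \<omega>) \<partial>P :: real)"
    by linarith
  then show ?thesis
  proof cases
    case 1
    then show ?thesis using mass boundsP boundsQ by linarith
  next
    case 2
    then show ?thesis using cond[OF 2] mass f'
      by (simp add: integral_reweight)
  qed
qed

text \<open>Induction on the dimension:
  condition on the new coordinate lying in its side of the rectangle.\<close>

lemma rectangle_prob_eq_of_char_eq:
  fixes U :: "'i \<Rightarrow> 'a \<Rightarrow> real" and V :: "'i \<Rightarrow> 'b \<Rightarrow> real"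
  assumes "finite S" and "prob_space P" and "prob_space Q"
    and "\<And>z. z \<in> S \<Longrightarrow> U z \<in> borel_measurable P"
    and "\<And>z. z \<in> S \<Longrightarrow> V z \<in> borel_measurable Q"
    and "\<And>t. (CLINT \<omega>|P. iexp (\<Sum>z\<in>S. t z * U z \<omega>)) = (CLINT \<omega>|Q. iexp (\<Sum>z\<in>S. t z * V z \<omega>))"
    and "\<And>z. z \<in> S \<Longrightarrow> B z \<in> sets borel"
  shows "(\<integral>\<omega>. (\<Prod>z\<in>S. indicator (B z) (U z \<omega>)) \<partial>P)
       = (\<integral>\<omega>. (\<Prod>z\<in>S. indicator (B z) (V z \<omega>)) \<partial>Q :: real)"
  using assms
proof (induction S arbitrary: P Q rule: finite_induct)
  case empty
  then show ?case by (simp add: prob_space.prob_space)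
next
  case (insert d F P Q)
  note P = insert.prems(1) and Q = insert.prems(2)
  have Um[measurable]: "\<And>z. z \<in> F \<Longrightarrow> U z \<in> borel_measurable P" "U d \<in> borel_measurable P"
    and Vm[measurable]: "\<And>z. z \<in> F \<Longrightarrow> V z \<in> borel_measurable Q" "V d \<in> borel_measurable Q"
    and Bm[measurable]: "\<And>z. z \<in> F \<Longrightarrow> B z \<in> sets borel" "B d \<in> sets borel"
    using insert.prems by auto
  define \<theta> where "\<theta> t \<omega> = (\<Sum>z\<in>F. t z * U z \<omega>)" for t \<omega>
  define \<theta>' where "\<theta>' t \<omega> = (\<Sum>z\<in>F. t z * V z \<omega>)" for t \<omega>
  have \<theta>_meas: "\<theta> t \<in> borel_measurable P" "\<theta>' t \<in> borel_measurable Q" for t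
    unfolding \<theta>_def[abs_def] \<theta>'_def[abs_def] by measurable
  have char_eq: "(CLINT \<omega>|P. iexp (s * U d \<omega> + k * \<theta> t \<omega>)) = (CLINT \<omega>|Q. iexp (s * V d \<omega> + k * \<theta>' t \<omega>))"
    for s k t
    using insert.prems(5)[of "(\<lambda>z. k * t z)(d := s)"]
    unfolding sum_insert_update[OF insert.hyps] \<theta>_def \<theta>'_def .
  have mass: "(\<integral>\<omega>. indicator (B d) (U d \<omega>) \<partial>P) = (\<integral>\<omega>. indicator (B d) (V d \<omega>) \<partial>Q :: real)"
    by (rule cos_weighted_law_eq(1)[OF P Um(2) \<theta>_meas(1) Q Vm(2) \<theta>_meas(2) char_eq Bm(2)])
  have "(\<integral>\<omega>. indicator (B d) (U d \<omega>) * (\<Prod>z\<in>F. indicator (B z) (U z \<omega>)) \<partial>P)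
      = (\<integral>\<omega>. indicator (B d) (V d \<omega>) * (\<Prod>z\<in>F. indicator (B z) (V z \<omega>)) \<partial>Q :: real)"
  proof (rule indicator_mult_integral_eq[OF P Um(2) Q Vm(2) Bm(2) _ _ prod_indicator_bounds prod_indicator_bounds mass])
    let ?P' = "reweight P (\<lambda>\<omega>. indicator (B d) (U d \<omega>))"
    let ?Q' = "reweight Q (\<lambda>\<omega>. indicator (B d) (V d \<omega>))"
    assume "0 < (\<integral>\<omega>. indicator (B d) (U d \<omega>) \<partial>P :: real)"
    then have PQ': "prob_space ?P'" "prob_space ?Q'"
      using mass by (auto intro!: prob_space_reweight[OF P, of _ 1] prob_space_reweight[OF Q, of _ 1])
    show "integral\<^sup>L ?P' (\<lambda>\<omega>. \<Prod>z\<in>F. indicator (B z) (U z \<omega>))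
        = integral\<^sup>L ?Q' (\<lambda>\<omega>. \<Prod>z\<in>F. indicator (B z) (V z \<omega>) :: real)"
    proof (rule insert.IH[OF PQ'])
      show "(CLINT \<omega>|?P'. iexp (\<Sum>z\<in>F. t z * U z \<omega>)) = (CLINT \<omega>|?Q'. iexp (\<Sum>z\<in>F. t z * V z \<omega>))" for t
        using conditioned_char_eq[OF P Um(2) \<theta>_meas(1) Q Vm(2) \<theta>_meas(2) char_eq Bm(2)]
        unfolding \<theta>_def \<theta>'_def .
    qed (auto simp: insert.prems)
  qed measurable
  then show ?case
    using insert.hyps by simp
qed

lemma emeasure_distr_PiE:
  fixes U :: "'i \<Rightarrow> 'a \<Rightarrow> real"
  assumes P: "prob_space P" and S: "finite S" and U: "\<And>z. z \<in> S \<Longrightarrow> U z \<in> borel_measurable P"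
    and B: "\<And>z. z \<in> S \<Longrightarrow> B z \<in> sets borel"
  shows "emeasure (distr P (PiM S (\<lambda>_. borel)) (\<lambda>\<omega>. \<lambda>z\<in>S. U z \<omega>)) (PiE S B)
     = ennreal (\<integral>\<omega>. (\<Prod>z\<in>S. indicator (B z) (U z \<omega>)) \<partial>P)"
proof -
  interpret prob_space P by fact
  have m: "(\<lambda>\<omega>. \<lambda>z\<in>S. U z \<omega>) \<in> measurable P (PiM S (\<lambda>_. borel))"
    using U by (intro measurable_restrict) auto
  have sets: "PiE S B \<in> sets (PiM S (\<lambda>_. borel))"
    using B by (intro sets_PiM_I_finite S) auto
  have eqs: "(\<lambda>\<omega>. \<lambda>z\<in>S. U z \<omega>) -` PiE S B \<inter> space P = {\<omega>\<in>space P. \<forall>z\<in>S. U z \<omega> \<in> B z}"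
    by (auto simp: PiE_def Pi_def)
  have "emeasure (distr P (PiM S (\<lambda>_. borel)) (\<lambda>\<omega>. \<lambda>z\<in>S. U z \<omega>)) (PiE S B)
      = emeasure P {\<omega>\<in>space P. \<forall>z\<in>S. U z \<omega> \<in> B z}"
    using m sets by (simp add: emeasure_distr eqs)
  also have "\<dots> = ennreal (measure P {\<omega>\<in>space P. \<forall>z\<in>S. U z \<omega> \<in> B z})"
    by (simp add: emeasure_eq_measure)
  also have "measure P {\<omega>\<in>space P. \<forall>z\<in>S. U z \<omega> \<in> B z} = (\<integral>\<omega>. indicator {\<omega>\<in>space P. \<forall>z\<in>S. U z \<omega> \<in> B z} \<omega> \<partial>P)"
    by (simp add: Int_absorb2 Int_absorb1 Collect_subset)
  also have "\<dots> = (\<integral>\<omega>. (\<Prod>z\<in>S. indicator (B z) (U z \<omega>)) \<partial>P)"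
    by (intro Bochner_Integration.integral_cong refl) (auto simp: indicator_def S)
  finally show ?thesis .
qed

lemma joint_law_eq_of_char_eq:
  fixes U :: "'i \<Rightarrow> 'a \<Rightarrow> real" and V :: "'i \<Rightarrow> 'b \<Rightarrow> real"
  assumes S: "finite S" and P: "prob_space P" and Q: "prob_space Q"
    and U: "\<And>z. z \<in> S \<Longrightarrow> U z \<in> borel_measurable P" and V: "\<And>z. z \<in> S \<Longrightarrow> V z \<in> borel_measurable Q"
    and ch: "\<And>t. (CLINT \<omega>|P. iexp (\<Sum>z\<in>S. t z * U z \<omega>)) = (CLINT \<omega>|Q. iexp (\<Sum>z\<in>S. t z * V z \<omega>))"
  shows "distr P (PiM S (\<lambda>_. borel)) (\<lambda>\<omega>. \<lambda>z\<in>S. U z \<omega>) = distr Q (PiM S (\<lambda>_. borel)) (\<lambda>\<omega>. \<lambda>z\<in>S. V z \<omega>)"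
proof (rule measure_eqI_PiM_finite[OF S])
  show "sets (distr P (PiM S (\<lambda>_. borel)) (\<lambda>\<omega>. \<lambda>z\<in>S. U z \<omega>)) = sets (PiM S (\<lambda>_. borel))" by simp
  show "sets (distr Q (PiM S (\<lambda>_. borel)) (\<lambda>\<omega>. \<lambda>z\<in>S. V z \<omega>)) = sets (PiM S (\<lambda>_. borel))" by simp
  fix B :: "'i \<Rightarrow> real set" assume B: "\<And>i. i \<in> S \<Longrightarrow> B i \<in> sets borel"
  show "emeasure (distr P (PiM S (\<lambda>_. borel)) (\<lambda>\<omega>. \<lambda>z\<in>S. U z \<omega>)) (PiE S B)
      = emeasure (distr Q (PiM S (\<lambda>_. borel)) (\<lambda>\<omega>. \<lambda>z\<in>S. V z \<omega>)) (PiE S B)"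
  proof -
    have "(\<integral>\<omega>. (\<Prod>z\<in>S. indicator (B z) (U z \<omega>)) \<partial>P) = (\<integral>\<omega>. (\<Prod>z\<in>S. indicator (B z) (V z \<omega>)) \<partial>Q :: real)"
      by (rule rectangle_prob_eq_of_char_eq[OF S P Q]) (simp_all add: U V B ch[unfolded of_real_sum of_real_mult])
    moreover have "emeasure (distr P (PiM S (\<lambda>_. borel)) (\<lambda>\<omega>. \<lambda>z\<in>S. U z \<omega>)) (PiE S B)
     = ennreal (\<integral>\<omega>. (\<Prod>z\<in>S. indicator (B z) (U z \<omega>)) \<partial>P)"
      by (rule emeasure_distr_PiE[OF P S]) (simp_all add: U B)
    moreover have "emeasure (distr Q (PiM S (\<lambda>_. borel)) (\<lambda>\<omega>. \<lambda>z\<in>S. V z \<omega>)) (PiE S B)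
     = ennreal (\<integral>\<omega>. (\<Prod>z\<in>S. indicator (B z) (V z \<omega>)) \<partial>Q)"
      by (rule emeasure_distr_PiE[OF Q S]) (simp_all add: V B)
    ultimately show ?thesis by simp
  qed
next
  show "range (\<lambda>_::nat. space (PiM S (\<lambda>_. borel :: real measure))) \<subseteq> prod_algebra S (\<lambda>_. borel)"
    using prod_algebraI_finite[OF S, of "\<lambda>_. UNIV" "\<lambda>_. borel"] by (auto simp: space_PiM)
  show "(\<Union>i::nat. space (PiM S (\<lambda>_. borel :: real measure))) = space (PiM S (\<lambda>_. borel))" by simp
  fix i :: nat
  show "emeasure (distr P (PiM S (\<lambda>_. borel)) (\<lambda>\<omega>. \<lambda>z\<in>S. U z \<omega>)) (space (PiM S (\<lambda>_. borel))) \<noteq> \<infinity>"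
  proof -
    interpret prob_space P by fact
    have "(\<lambda>\<omega>. \<lambda>z\<in>S. U z \<omega>) \<in> measurable P (PiM S (\<lambda>_. borel))"
      using U by (intro measurable_restrict) auto
    then show ?thesis by (subst emeasure_distr) auto
  qed
qed

section \<open>Centred Gaussian fields\<close>

lemma cgf_prob_space: "centered_gaussian_field M V X K \<Longrightarrow> prob_space M"
  and cgf_measurable: "centered_gaussian_field M V X K \<Longrightarrow> z \<in> V \<Longrightarrow> X z \<in> borel_measurable M"
  unfolding centered_gaussian_field_def by auto

lemma cgf_char_restrict:
  assumes c: "centered_gaussian_field M V X K" and fin: "finite V" and sub: "V' \<subseteq> V"
  shows "(CLINT \<omega>|M. iexp (\<Sum>z\<in>V'. t z * X z \<omega>))
     = complex_of_real (exp (- (\<Sum>x\<in>V'. \<Sum>y\<in>V'. t x * t y * K x y) / 2))"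
proof -
  define t' where "t' z = (if z \<in> V' then t z else 0)" for z
  have ch: "(CLINT \<omega>|M. iexp (\<Sum>z\<in>V. t' z * X z \<omega>))
     = complex_of_real (exp (- (\<Sum>x\<in>V. \<Sum>y\<in>V. t' x * t' y * K x y) / 2))"
    using c unfolding centered_gaussian_field_def by blast
  have e1: "(\<Sum>z\<in>V. t' z * X z \<omega>) = (\<Sum>z\<in>V'. t z * X z \<omega>)" for \<omega>
    using fin sub by (intro sum.mono_neutral_cong_right) (auto simp: t'_def)
  have e2: "(\<Sum>y\<in>V. t' x * t' y * K x y) = (\<Sum>y\<in>V'. t' x * t y * K x y)" for x
    using fin sub by (intro sum.mono_neutral_cong_right) (auto simp: t'_def)
  have e3: "(\<Sum>x\<in>V. \<Sum>y\<in>V'. t' x * t y * K x y) = (\<Sum>x\<in>V'. \<Sum>y\<in>V'. t x * t y * K x y)"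
    using fin sub by (intro sum.mono_neutral_cong_right) (auto simp: t'_def intro: finite_subset)
  show ?thesis using ch unfolding e1 e2 e3 .
qed

lemma cgf_char_coord:
  assumes c: "centered_gaussian_field M V X K" and fin: "finite V" and z: "z \<in> V"
  shows "(CLINT \<omega>|M. iexp (t * X z \<omega>)) = complex_of_real (exp (- (t * t * K z z) / 2))"
  using cgf_char_restrict[OF c fin, of "{z}" "\<lambda>_. t"] z by simp

text \<open>The diagonal of the covariance is nonnegative, since characteristic functions
  are bounded by one.\<close>

lemma cgf_variance_nonneg:
  assumes c: "centered_gaussian_field M V X K" and fin: "finite V" and z: "z \<in> V"
  shows "0 \<le> K z z"
proof (rule ccontr)
  assume "\<not> 0 \<le> K z z"
  then have "1 < exp (- (1 * 1 * K z z) / 2)" by simp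
  also have "\<dots> = norm (CLINT \<omega>|M. iexp (1 * X z \<omega>))"
    using cgf_char_coord[OF c fin z, of 1] by simp
  also have "\<dots> \<le> (\<integral>\<omega>. norm (iexp (1 * X z \<omega>)) \<partial>M)"
    by (rule integral_norm_bound)
  also have "\<dots> = 1"
    using cgf_prob_space[OF c] by (simp add: norm_exp_i_times prob_space.prob_space)
  finally show False by simp
qed

text \<open>Each coordinate is an integrable, centred normal variable, almost surely zero
  where the variance vanishes (e.g. on the boundary, where the Green function is 0).\<close>

lemma cgf_coord_props:
  assumes c: "centered_gaussian_field M V X K" and fin: "finite V" and z: "z \<in> V"
  shows "integrable M (X z)" "integral\<^sup>L M (X z) = 0" "K z z = 0 \<Longrightarrow> AE \<omega> in M. X z \<omega> = 0"
  using centered_normal_props[OF cgf_prob_space[OF c] cgf_measurable[OF c z] cgf_variance_nonneg[OF c fin z] cgf_char_coord[OF c fin z]]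
  by auto

section \<open>Independent copies: product probability spaces\<close>

lemma pair_prob_spaceI: "prob_space P \<Longrightarrow> prob_space Q \<Longrightarrow> pair_prob_space P Q"
  by (auto simp: pair_prob_space_def pair_sigma_finite_def prob_space_imp_sigma_finite)

lemma integral_pair_fst:
  fixes f :: "'a \<Rightarrow> real"
  assumes P: "prob_space P" and Q: "prob_space Q" and f: "integrable P f"
  shows "integrable (P \<Otimes>\<^sub>M Q) (\<lambda>q. f (fst q))" "(\<integral>q. f (fst q) \<partial>(P \<Otimes>\<^sub>M Q)) = integral\<^sup>L P f"
proof -
  interpret pair_prob_space P Q using P Q by (rule pair_prob_spaceI)
  have fm[measurable]: "f \<in> borel_measurable P" using f by auto
  show I: "integrable (P \<Otimes>\<^sub>M Q) (\<lambda>q. f (fst q))"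
    by (rule Fubini_integrable) (use f in \<open>auto simp: prob_space_axioms Q\<close>)
  have "(\<integral>q. f (fst q) \<partial>(P \<Otimes>\<^sub>M Q)) = (\<integral>x. (\<integral>y. f (fst (x, y)) \<partial>Q) \<partial>P)"
    using integral_fst'[OF I] by simp
  also have "\<dots> = integral\<^sup>L P f" by (simp add: M2.prob_space)
  finally show "(\<integral>q. f (fst q) \<partial>(P \<Otimes>\<^sub>M Q)) = integral\<^sup>L P f" .
qed

lemma integral_pair_snd:
  fixes f :: "'b \<Rightarrow> real"
  assumes P: "prob_space P" and Q: "prob_space Q" and f: "integrable Q f"
  shows "integrable (P \<Otimes>\<^sub>M Q) (\<lambda>q. f (snd q))" "(\<integral>q. f (snd q) \<partial>(P \<Otimes>\<^sub>M Q)) = integral\<^sup>L Q f"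
proof -
  interpret pair_prob_space P Q using P Q by (rule pair_prob_spaceI)
  have fm[measurable]: "f \<in> borel_measurable Q" using f by auto
  show I: "integrable (P \<Otimes>\<^sub>M Q) (\<lambda>q. f (snd q))"
    by (rule Fubini_integrable) (use f in \<open>auto simp: Q\<close>)
  have "(\<integral>q. f (snd q) \<partial>(P \<Otimes>\<^sub>M Q)) = (\<integral>x. (\<integral>y. f (snd (x, y)) \<partial>Q) \<partial>P)"
    using integral_fst'[OF I] by simp
  also have "\<dots> = integral\<^sup>L Q f" by (simp add: M1.prob_space)
  finally show "(\<integral>q. f (snd q) \<partial>(P \<Otimes>\<^sub>M Q)) = integral\<^sup>L Q f" .
qed

lemma char_pair_product:
  assumes P: "prob_space P" and Q: "prob_space Q" and f[measurable]: "f \<in> borel_measurable P" and g[measurable]: "g \<in> borel_measurable Q"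
  shows "(CLINT q|P \<Otimes>\<^sub>M Q. iexp (f (fst q) + g (snd q))) = (CLINT x|P. iexp (f x)) * (CLINT y|Q. iexp (g y))"
proof -
  interpret pair_prob_space P Q using P Q by (rule pair_prob_spaceI)
  interpret PQ: prob_space "P \<Otimes>\<^sub>M Q" by (intro prob_space_pair P Q)
  have I: "integrable (P \<Otimes>\<^sub>M Q) (\<lambda>q. iexp (f (fst q) + g (snd q)))"
    by (rule P.integrable_iexp_real) measurable
  have "(CLINT q|P \<Otimes>\<^sub>M Q. iexp (f (fst q) + g (snd q))) = (CLINT x|P. (CLINT y|Q. iexp (f (fst (x,y)) + g (snd (x,y)))))"
    using integral_fst'[OF I] by simp
  also have "\<dots> = (CLINT x|P. iexp (f x) * (CLINT y|Q. iexp (g y)))"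
  proof (intro Bochner_Integration.integral_cong refl)
    fix x
    have "(CLINT y|Q. iexp (f x + g y)) = (CLINT y|Q. iexp (f x) * iexp (g y))"
      by (simp add: distrib_left exp_add)
    also have "\<dots> = iexp (f x) * (CLINT y|Q. iexp (g y))"
      by (rule integral_mult_right_zero)
    finally show "(CLINT y|Q. iexp (f (fst (x, y)) + g (snd (x, y)))) = iexp (f x) * (CLINT y|Q. iexp (g y))"
      by simp
  qed
  also have "\<dots> = (CLINT x|P. iexp (f x)) * (CLINT y|Q. iexp (g y))"
    by (rule integral_mult_left_zero)
  finally show ?thesis .
qed

section \<open>The killed random walk and its Green function\<close>

lemma adj_sym: "adj x y = adj y x"
  unfolding adj_def by (simp add: abs_minus_commute)

lemma kill_kernel_sym: "kill_kernel N x y = kill_kernel N y x"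
  unfolding kill_kernel_def using adj_sym by auto

lemma kill_kernel_nonneg: "0 \<le> kill_kernel N x y"
  unfolding kill_kernel_def by auto

lemma kill_kernel_outside_left: "x \<notin> box_int N \<Longrightarrow> kill_kernel N x y = 0"
  and kill_kernel_outside_right: "y \<notin> box_int N \<Longrightarrow> kill_kernel N x y = 0"
  unfolding kill_kernel_def by auto

lemma finite_box_int[simp]: "finite (box_int N)"
  unfolding box_int_def by simp

lemma finite_box[simp]: "finite (box N)"
  unfolding box_def by simp

lemma box_int_sub: "box_int N \<subseteq> box N"
  unfolding box_int_def box_def by auto

lemma kill_pow_nonneg: "0 \<le> kill_pow N m x y"
  by (induction m arbitrary: x) (auto intro!: sum_nonneg mult_nonneg_nonneg kill_kernel_nonneg)

lemma sum_delta_mult: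
  "finite A \<Longrightarrow> (\<Sum>z\<in>A. (if x = z then 1 else 0) * f z) = (if x \<in> A then f x else (0::real))"
  "finite A \<Longrightarrow> (\<Sum>z\<in>A. f z * (if z = y then 1 else 0)) = (if y \<in> A then f y else (0::real))"
proof -
  assume A: "finite A"
  have "(\<Sum>z\<in>A. (if x = z then 1 else 0) * f z) = (\<Sum>z\<in>A. if x = z then f z else 0)"
    by (rule sum.cong) auto
  then show "(\<Sum>z\<in>A. (if x = z then 1 else 0) * f z) = (if x \<in> A then f x else (0::real))"
    using A by (simp add: sum.delta')
  have "(\<Sum>z\<in>A. f z * (if z = y then 1 else 0)) = (\<Sum>z\<in>A. if z = y then f z else 0)"
    by (rule sum.cong) auto
  then show "(\<Sum>z\<in>A. f z * (if z = y then 1 else 0)) = (if y \<in> A then f y else (0::real))"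
    using A by (simp add: sum.delta)
qed

lemma kill_pow_one: "kill_pow N (Suc 0) x y = kill_kernel N x y"
  using sum_delta_mult(2)[of "box_int N" "kill_kernel N x" y] by (simp add: kill_kernel_outside_right)

text \<open>kill_pow N m is the m-th matrix power of the kernel, so it may also be built by
  adding the last step; hence it is symmetric.\<close>

lemma kill_pow_right:
  "kill_pow N (Suc m) x y = (\<Sum>z\<in>box_int N. kill_pow N m x z * kill_kernel N z y)"
proof (induction m arbitrary: x)
  case 0
  then show ?case using sum_delta_mult(1)[of "box_int N" x "\<lambda>z. kill_kernel N z y"]
    by (simp only: kill_pow_one kill_pow.simps(1)) (simp add: kill_kernel_outside_left)
next
  case (Suc m)
  have "kill_pow N (Suc (Suc m)) x y = (\<Sum>z\<in>box_int N. kill_kernel N x z * (\<Sum>u\<in>box_int N. kill_pow N m z u * kill_kernel N u y))"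
    using Suc by simp
  also have "\<dots> = (\<Sum>u\<in>box_int N. (\<Sum>z\<in>box_int N. kill_kernel N x z * kill_pow N m z u) * kill_kernel N u y)"
  proof -
    have "(\<Sum>z\<in>box_int N. kill_kernel N x z * (\<Sum>u\<in>box_int N. kill_pow N m z u * kill_kernel N u y))
       = (\<Sum>z\<in>box_int N. \<Sum>u\<in>box_int N. kill_kernel N x z * kill_pow N m z u * kill_kernel N u y)"
      by (simp add: sum_distrib_left mult.assoc)
    also have "\<dots> = (\<Sum>u\<in>box_int N. \<Sum>z\<in>box_int N. kill_kernel N x z * kill_pow N m z u * kill_kernel N u y)"
      by (rule sum.swap)
    also have "\<dots> = (\<Sum>u\<in>box_int N. (\<Sum>z\<in>box_int N. kill_kernel N x z * kill_pow N m z u) * kill_kernel N u y)"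
      by (simp add: sum_distrib_right)
    finally show ?thesis .
  qed
  finally show ?case by simp
qed

lemma kill_pow_sym: "kill_pow N m x y = kill_pow N m y x"
proof (induction m arbitrary: x y)
  case 0 then show ?case by simp
next
  case (Suc m)
  have "kill_pow N (Suc m) x y = (\<Sum>z\<in>box_int N. kill_kernel N x z * kill_pow N m z y)" by simp
  also have "\<dots> = (\<Sum>z\<in>box_int N. kill_pow N m y z * kill_kernel N z x)"
    by (intro sum.cong refl) (metis Suc kill_kernel_sym mult.commute)
  also have "\<dots> = kill_pow N (Suc m) y x" by (simp only: kill_pow_right)
  finally show ?case .
qed

lemma green_sym: "green N x y = green N y x"
  unfolding green_def by (simp add: kill_pow_sym[of N _ x y] conj_commute)

text \<open>Lyapunov function for the killed walk: 2N^2 - |x|^2 is nonnegative on V_N and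
  decreases by exactly 1 in expectation per step from an interior site.\<close>

definition potential :: "nat \<Rightarrow> site \<Rightarrow> real" where
  "potential N x = 2 * (real N)^2 - (real_of_int (fst x))^2 - (real_of_int (snd x))^2"

lemma adj_iff: "adj x z \<longleftrightarrow> z \<in> {(fst x + 1, snd x), (fst x - 1, snd x), (fst x, snd x + 1), (fst x, snd x - 1)}"
proof -
  obtain a b where x: "x = (a, b)" by force
  obtain c d where z: "z = (c, d)" by force
  show ?thesis unfolding x z adj_def by auto
qed

lemma potential_nonneg: "z \<in> box N \<Longrightarrow> 0 \<le> potential N z"
proof -
  assume "z \<in> box N"
  then have a: "0 \<le> fst z" "fst z \<le> int N" "0 \<le> snd z" "snd z \<le> int N" unfolding box_def by auto
  have "(real_of_int (fst z))^2 \<le> (real N)^2"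
    using a by (intro power_mono) auto
  moreover have "(real_of_int (snd z))^2 \<le> (real N)^2"
    using a by (intro power_mono) auto
  ultimately show ?thesis unfolding potential_def by simp
qed

lemma potential_step:
  assumes x: "x \<in> box_int N"
  shows "(\<Sum>z\<in>box_int N. kill_kernel N x z * potential N z) \<le> potential N x - 1"
proof -
  obtain a b where xab: "x = (a, b)" by force
  let ?nb = "{(a + 1, b), (a - 1, b), (a, b + 1), (a, b - 1)}"
  have nbbox: "?nb \<subseteq> box N" using x unfolding xab box_int_def box_def by auto
  have "(\<Sum>z\<in>box_int N. kill_kernel N x z * potential N z) = (\<Sum>z\<in>box_int N \<inter> ?nb. potential N z / 4)"
    unfolding kill_kernel_def using x
    by (auto simp: sum.inter_restrict adj_iff xab intro!: sum.cong)
  also have "\<dots> \<le> (\<Sum>z\<in>?nb. potential N z / 4)"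
    using nbbox potential_nonneg by (intro sum_mono2) auto
  also have "\<dots> = potential N x - 1"
    unfolding xab potential_def by (simp add: power2_eq_square) (simp add: field_simps)
  finally show ?thesis .
qed

text \<open>Iterating the one-step decrease: the expected number of steps before killing is
  bounded by the potential, so the Green function series converge.\<close>

lemma potential_descent:
  assumes x: "x \<in> box_int N"
  shows "(\<Sum>y\<in>box_int N. kill_pow N n x y * potential N y) + (\<Sum>m<n. \<Sum>y\<in>box_int N. kill_pow N m x y) \<le> potential N x"
proof (induction n)
  case 0
  show ?case using sum_delta_mult(1)[of "box_int N" x "potential N"] x by simp
next
  case (Suc n)
  have "(\<Sum>y\<in>box_int N. kill_pow N (Suc n) x y * potential N y)
     = (\<Sum>y\<in>box_int N. \<Sum>z\<in>box_int N. kill_pow N n x z * (kill_kernel N z y * potential N y))"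
    unfolding kill_pow_right by (simp add: sum_distrib_right mult.assoc)
  also have "\<dots> = (\<Sum>z\<in>box_int N. kill_pow N n x z * (\<Sum>y\<in>box_int N. kill_kernel N z y * potential N y))"
    by (subst sum.swap) (simp add: sum_distrib_left)
  also have "\<dots> \<le> (\<Sum>z\<in>box_int N. kill_pow N n x z * (potential N z - 1))"
    by (intro sum_mono mult_left_mono potential_step kill_pow_nonneg)
  also have "\<dots> = (\<Sum>y\<in>box_int N. kill_pow N n x y * potential N y) - (\<Sum>y\<in>box_int N. kill_pow N n x y)"
    by (simp add: algebra_simps sum_subtractf)
  finally show ?case using Suc by simp
qed

lemma kill_pow_summable:
  assumes x: "x \<in> box_int N" and y: "y \<in> box_int N"
  shows "summable (\<lambda>m. kill_pow N m x y)"
proof (rule summableI_nonneg_bounded)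
  fix n
  have "(\<Sum>m<n. kill_pow N m x y) \<le> (\<Sum>m<n. \<Sum>y\<in>box_int N. kill_pow N m x y)"
    using y by (intro sum_mono member_le_sum kill_pow_nonneg) auto
  also have "\<dots> \<le> potential N x"
  proof -
    have "0 \<le> (\<Sum>y\<in>box_int N. kill_pow N n x y * potential N y)"
      using box_int_sub by (intro sum_nonneg mult_nonneg_nonneg kill_pow_nonneg potential_nonneg) auto
    then show ?thesis using potential_descent[OF x, of n] by simp
  qed
  finally show "(\<Sum>m<n. kill_pow N m x y) \<le> potential N x" .
qed (rule kill_pow_nonneg)

lemma green_first_step:
  "green N x y = (if x = y \<and> y \<in> box_int N then 1 else 0) + (\<Sum>z\<in>box_int N. kill_kernel N x z * green N z y)"
proof (cases "x \<in> box_int N \<and> y \<in> box_int N")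
  case False
  then show ?thesis
    by (auto simp: green_def kill_kernel_outside_left intro!: sum.neutral)
next
  case True
  then have x: "x \<in> box_int N" and y: "y \<in> box_int N" by auto
  have "green N x y = (\<Sum>m. kill_pow N m x y)" using x y by (simp add: green_def)
  also have "\<dots> = kill_pow N 0 x y + (\<Sum>m. kill_pow N (Suc m) x y)"
    using suminf_split_head[OF kill_pow_summable[OF x y]] by simp
  also have "(\<Sum>m. kill_pow N (Suc m) x y) = (\<Sum>m. \<Sum>z\<in>box_int N. kill_kernel N x z * kill_pow N m z y)"
    by simp
  also have "\<dots> = (\<Sum>z\<in>box_int N. \<Sum>m. kill_kernel N x z * kill_pow N m z y)"
    using kill_pow_summable[OF _ y] by (intro suminf_sum summable_mult) auto
  also have "\<dots> = (\<Sum>z\<in>box_int N. kill_kernel N x z * green N z y)"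
    using kill_pow_summable[OF _ y] y
    by (intro sum.cong refl) (simp add: green_def suminf_mult)
  finally show ?thesis using x y by simp
qed

lemma green_last_step:
  "green N x y = (if x = y \<and> y \<in> box_int N then 1 else 0) + (\<Sum>z\<in>box_int N. green N x z * kill_kernel N z y)"
  using green_first_step[of N y x] by (auto simp: green_sym[of N _ x] green_sym[of N y x] kill_kernel_sym mult.commute)

section \<open>A Schur-complement identity for Green functions\<close>

lemma sum_subset_split:
  fixes f :: "'a \<Rightarrow> real"
  assumes "finite D" "D' \<subseteq> D"
  shows "(\<Sum>z\<in>D. f z) = (\<Sum>z\<in>D'. f z) + (\<Sum>z\<in>D - D'. f z)"
  using assms by (metis add.commute sum.subset_diff)

text \<open>First,
  G and G' differ on D' by the paths that leave D' at some point w \<in> D - D'.\<close>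

lemma schur_exit_decomposition:
  fixes G G' K :: "'a \<Rightarrow> 'a \<Rightarrow> real"
  assumes fin: "finite D" and sub: "D' \<subseteq> D"
    and R1: "\<And>x y. x \<in> D' \<Longrightarrow> y \<in> D' \<Longrightarrow> G x y = (if x = y then 1 else 0) + (\<Sum>z\<in>D. K x z * G z y)"
    and R2': "\<And>x y. x \<in> D' \<Longrightarrow> y \<in> D' \<Longrightarrow> G' x y = (if x = y then 1 else 0) + (\<Sum>z\<in>D'. G' x z * K z y)"
    and x: "x \<in> D'" and y: "y \<in> D'"
  shows "G x y = G' x y + (\<Sum>w\<in>D - D'. (\<Sum>a\<in>D'. G' x a * K a w) * G w y)"
proof -
  have finD': "finite D'" using fin sub finite_subset by auto
  define T where "T = (\<Sum>a\<in>D'. G' x a * G a y)"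
  have "T = (\<Sum>a\<in>D'. G' x a * ((if a = y then 1 else 0) + (\<Sum>z\<in>D'. K a z * G z y) + (\<Sum>w\<in>D - D'. K a w * G w y)))"
    unfolding T_def
    by (intro sum.cong refl) (simp add: R1 y sum_subset_split[OF fin sub] add.assoc)
  also have "\<dots> = (\<Sum>a\<in>D'. G' x a * (if a = y then 1 else 0)) + (\<Sum>a\<in>D'. \<Sum>z\<in>D'. G' x a * K a z * G z y)
      + (\<Sum>a\<in>D'. \<Sum>w\<in>D - D'. G' x a * K a w * G w y)"
    by (simp add: distrib_left sum.distrib sum_distrib_left mult.assoc)
  also have "(\<Sum>a\<in>D'. G' x a * (if a = y then 1 else 0)) = G' x y"
    using sum_delta_mult(2)[OF finD'] y by simp
  also have "(\<Sum>a\<in>D'. \<Sum>z\<in>D'. G' x a * K a z * G z y) = (\<Sum>z\<in>D'. (\<Sum>a\<in>D'. G' x a * K a z) * G z y)"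
    by (subst sum.swap) (simp add: sum_distrib_right)
  also have "\<dots> = (\<Sum>z\<in>D'. (G' x z - (if x = z then 1 else 0)) * G z y)"
    by (intro sum.cong refl) (simp add: R2'[OF x])
  also have "\<dots> = T - G x y"
    unfolding T_def using finD' x
    by (simp add: left_diff_distrib sum_subtractf if_distrib[of "\<lambda>c. c * _"] sum.delta' cong: if_cong)
  also have "(\<Sum>a\<in>D'. \<Sum>w\<in>D - D'. G' x a * K a w * G w y) = (\<Sum>w\<in>D - D'. (\<Sum>a\<in>D'. G' x a * K a w) * G w y)"
    by (subst sum.swap) (simp add: sum_distrib_right)
  finally show ?thesis by simp
qed

text \<open>Second, from a point w \<in> D - D' the Green function into D' is obtained by
  following G to the last point w' outside D' and then K G'.\<close>

lemma schur_entrance_decomposition: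
  fixes G G' K :: "'a \<Rightarrow> 'a \<Rightarrow> real"
  assumes fin: "finite D" and sub: "D' \<subseteq> D"
    and R2: "\<And>w y. w \<in> D - D' \<Longrightarrow> y \<in> D' \<Longrightarrow> G w y = (\<Sum>z\<in>D. G w z * K z y)"
    and R1': "\<And>x y. x \<in> D' \<Longrightarrow> y \<in> D' \<Longrightarrow> G' x y = (if x = y then 1 else 0) + (\<Sum>z\<in>D'. K x z * G' z y)"
    and w: "w \<in> D - D'" and y: "y \<in> D'"
  shows "G w y = (\<Sum>w'\<in>D - D'. G w w' * (\<Sum>b\<in>D'. K w' b * G' b y))"
proof -
  have finD': "finite D'" using fin sub finite_subset by auto
  define U where "U = (\<Sum>b\<in>D'. G w b * G' b y)"
  have "U = (\<Sum>b\<in>D'. G w b * ((if b = y then 1 else 0) + (\<Sum>z\<in>D'. K b z * G' z y)))"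
    unfolding U_def by (intro sum.cong refl) (simp add: R1' y)
  also have "\<dots> = (\<Sum>b\<in>D'. G w b * (if b = y then 1 else 0)) + (\<Sum>b\<in>D'. \<Sum>z\<in>D'. G w b * K b z * G' z y)"
    by (simp add: distrib_left sum.distrib sum_distrib_left mult.assoc)
  also have "(\<Sum>b\<in>D'. G w b * (if b = y then 1 else 0)) = G w y"
    using sum_delta_mult(2)[OF finD'] y by simp
  also have "(\<Sum>b\<in>D'. \<Sum>z\<in>D'. G w b * K b z * G' z y) = (\<Sum>z\<in>D'. (\<Sum>b\<in>D'. G w b * K b z) * G' z y)"
    by (subst sum.swap) (simp add: sum_distrib_right)
  also have "\<dots> = (\<Sum>z\<in>D'. (G w z - (\<Sum>w'\<in>D - D'. G w w' * K w' z)) * G' z y)"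
    by (intro sum.cong refl) (simp add: R2[OF w] sum_subset_split[OF fin sub])
  also have "\<dots> = U - (\<Sum>w'\<in>D - D'. G w w' * (\<Sum>b\<in>D'. K w' b * G' b y))"
    unfolding U_def
    by (simp add: left_diff_distrib sum_subtractf sum_distrib_right sum_distrib_left mult.assoc sum.swap[of _ "D - D'" D'])
  finally show ?thesis by simp
qed

lemma schur_complement:
  fixes G G' K :: "'a \<Rightarrow> 'a \<Rightarrow> real"
  assumes fin: "finite D" and sub: "D' \<subseteq> D"
    and R1: "\<And>x y. x \<in> D' \<Longrightarrow> y \<in> D' \<Longrightarrow> G x y = (if x = y then 1 else 0) + (\<Sum>z\<in>D. K x z * G z y)"
    and R2: "\<And>w y. w \<in> D - D' \<Longrightarrow> y \<in> D' \<Longrightarrow> G w y = (\<Sum>z\<in>D. G w z * K z y)"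
    and R1': "\<And>x y. x \<in> D' \<Longrightarrow> y \<in> D' \<Longrightarrow> G' x y = (if x = y then 1 else 0) + (\<Sum>z\<in>D'. K x z * G' z y)"
    and R2': "\<And>x y. x \<in> D' \<Longrightarrow> y \<in> D' \<Longrightarrow> G' x y = (if x = y then 1 else 0) + (\<Sum>z\<in>D'. G' x z * K z y)"
    and x: "x \<in> D'" and y: "y \<in> D'"
  shows "G x y = G' x y + (\<Sum>w\<in>D - D'. \<Sum>w'\<in>D - D'.
            (\<Sum>a\<in>D'. G' x a * K a w) * G w w' * (\<Sum>b\<in>D'. K w' b * G' b y))"
proof -
  have entrance: "G w y = (\<Sum>w'\<in>D - D'. G w w' * (\<Sum>b\<in>D'. K w' b * G' b y))" if "w \<in> D - D'" for w
    by (rule schur_entrance_decomposition[OF fin sub R2 R1' that y])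
  have "G x y = G' x y + (\<Sum>w\<in>D - D'. (\<Sum>a\<in>D'. G' x a * K a w) * G w y)"
    by (rule schur_exit_decomposition[OF fin sub R1 R2' x y])
  also have "\<dots> = G' x y + (\<Sum>w\<in>D - D'. (\<Sum>a\<in>D'. G' x a * K a w)
      * (\<Sum>w'\<in>D - D'. G w w' * (\<Sum>b\<in>D'. K w' b * G' b y)))"
    using entrance by simp
  finally show ?thesis by (simp add: sum_distrib_left mult.assoc)
qed
section \<open>Two disjoint boxes inside V_{2N}\<close>

text \<open>The interior of V_N (left box) and its translate by (N,0) (right box) are
  disjoint subsets of the interior of V_{2N}; the walk cannot jump from one to the
  other, so the Green function of the union is the sum of two copies of G_N.\<close>

definition shift_left :: "nat \<Rightarrow> site \<Rightarrow> site" where "shift_left N z = (fst z - int N, snd z)"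
definition shift_right :: "nat \<Rightarrow> site \<Rightarrow> site" where "shift_right N z = (fst z + int N, snd z)"
definition right_box :: "nat \<Rightarrow> site set" where "right_box N = shift_right N ` box_int N"
definition two_boxes :: "nat \<Rightarrow> site set" where "two_boxes N = box_int N \<union> right_box N"
definition green_two_boxes :: "nat \<Rightarrow> site \<Rightarrow> site \<Rightarrow> real" where
  "green_two_boxes N x y = green N x y + green N (shift_left N x) (shift_left N y)"

lemma shift_left_right[simp]: "shift_left N (shift_right N z) = z" "shift_right N (shift_left N z) = z"
  by (auto simp: shift_left_def shift_right_def)

lemma inj_shift_right: "inj (shift_right N)"
  by (metis injI shift_left_right(1))

lemma right_box_iff: "x \<in> right_box N \<longleftrightarrow> shift_left N x \<in> box_int N"
  unfolding right_box_def by (metis image_iff shift_left_right)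

lemma finite_right_box[simp]: "finite (right_box N)" and finite_two_boxes[simp]: "finite (two_boxes N)"
  by (auto simp: right_box_def two_boxes_def)

lemma left_box_not_right: "x \<in> box_int N \<Longrightarrow> x \<notin> right_box N"
  and shift_left_left_box: "x \<in> box_int N \<Longrightarrow> shift_left N x \<notin> box_int N"
  and right_box_not_left: "x \<in> right_box N \<Longrightarrow> x \<notin> box_int N"
  by (auto simp: right_box_iff box_int_def shift_left_def)

lemma two_boxes_interior: "two_boxes N \<subseteq> box_int (2 * N)"
  by (auto simp: two_boxes_def right_box_iff box_int_def shift_left_def)

lemma kernel_on_left_box: "x \<in> box_int N \<Longrightarrow> z \<in> box_int N \<Longrightarrow> kill_kernel (2 * N) x z = kill_kernel N x z"
  using two_boxes_interior[of N] by (auto simp: kill_kernel_def two_boxes_def)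

lemma kernel_on_right_box: "x \<in> right_box N \<Longrightarrow> z \<in> right_box N \<Longrightarrow> kill_kernel (2 * N) x z = kill_kernel N (shift_left N x) (shift_left N z)"
  using two_boxes_interior[of N] by (auto simp: kill_kernel_def two_boxes_def right_box_iff adj_def shift_left_def)

lemma kernel_left_to_right: "x \<in> box_int N \<Longrightarrow> z \<in> right_box N \<Longrightarrow> kill_kernel (2 * N) x z = 0"
  by (auto simp: kill_kernel_def right_box_iff adj_def shift_left_def box_int_def)

lemma kernel_right_to_left: "x \<in> right_box N \<Longrightarrow> z \<in> box_int N \<Longrightarrow> kill_kernel (2 * N) x z = 0"
  using kernel_left_to_right kill_kernel_sym by metis

lemma shift_left_right_box: "x \<in> two_boxes N \<Longrightarrow> x \<notin> box_int N \<Longrightarrow> shift_left N x \<in> box_int N"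
  by (auto simp: two_boxes_def right_box_iff)

lemma shift_right_not_left_box: "u \<in> box_int N \<Longrightarrow> shift_right N u \<notin> box_int N"
  using right_box_not_left[of "shift_right N u" N] by (auto simp: right_box_def)

lemma sum_two_boxes:
  fixes f :: "site \<Rightarrow> real"
  shows "(\<Sum>z\<in>two_boxes N. f z) = (\<Sum>z\<in>box_int N. f z) + (\<Sum>z\<in>right_box N. f z)"
  unfolding two_boxes_def by (rule sum.union_disjoint) (auto dest: left_box_not_right)

lemma sum_right_box:
  fixes f :: "site \<Rightarrow> real"
  shows "(\<Sum>z\<in>right_box N. f z) = (\<Sum>u\<in>box_int N. f (shift_right N u))"
  unfolding right_box_def by (rule sum.reindex_cong[OF _ refl refl]) (meson inj_shift_right inj_on_subset subset_UNIV)

lemma kernel_green_left: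
  assumes x: "x \<in> two_boxes N"
  shows "(\<Sum>z\<in>two_boxes N. kill_kernel (2 * N) x z * green N z y) = (\<Sum>z\<in>box_int N. kill_kernel N x z * green N z y)"
proof -
  have "(\<Sum>z\<in>right_box N. kill_kernel (2 * N) x z * green N z y) = 0"
    by (intro sum.neutral) (auto simp: green_def dest: right_box_not_left)
  moreover have "(\<Sum>z\<in>box_int N. kill_kernel (2 * N) x z * green N z y) = (\<Sum>z\<in>box_int N. kill_kernel N x z * green N z y)"
  proof (cases "x \<in> box_int N")
    case True then show ?thesis by (intro sum.cong refl) (simp add: kernel_on_left_box)
  next
    case False
    then have "x \<in> right_box N" using x by (auto simp: two_boxes_def)
    then show ?thesis using False by (intro sum.cong refl) (simp add: kernel_right_to_left kill_kernel_outside_left)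
  qed
  ultimately show ?thesis by (simp add: sum_two_boxes)
qed

lemma kernel_green_right:
  assumes x: "x \<in> two_boxes N"
  shows "(\<Sum>z\<in>two_boxes N. kill_kernel (2 * N) x z * green N (shift_left N z) (shift_left N y))
       = (\<Sum>u\<in>box_int N. kill_kernel N (shift_left N x) u * green N u (shift_left N y))"
proof -
  have "(\<Sum>z\<in>box_int N. kill_kernel (2 * N) x z * green N (shift_left N z) (shift_left N y)) = 0"
    by (intro sum.neutral) (auto simp: green_def dest: shift_left_left_box)
  moreover have "(\<Sum>z\<in>right_box N. kill_kernel (2 * N) x z * green N (shift_left N z) (shift_left N y))
      = (\<Sum>u\<in>box_int N. kill_kernel N (shift_left N x) u * green N u (shift_left N y))"
    unfolding sum_right_box
  proof (cases "x \<in> right_box N")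
    case True then show "(\<Sum>u\<in>box_int N. kill_kernel (2 * N) x (shift_right N u) * green N (shift_left N (shift_right N u)) (shift_left N y))
      = (\<Sum>u\<in>box_int N. kill_kernel N (shift_left N x) u * green N u (shift_left N y))"
      by (intro sum.cong refl) (simp add: kernel_on_right_box right_box_iff)
  next
    case False
    then have xA: "x \<in> box_int N" using x by (auto simp: two_boxes_def)
    then show "(\<Sum>u\<in>box_int N. kill_kernel (2 * N) x (shift_right N u) * green N (shift_left N (shift_right N u)) (shift_left N y))
      = (\<Sum>u\<in>box_int N. kill_kernel N (shift_left N x) u * green N u (shift_left N y))"
      by (intro sum.cong refl) (simp add: kernel_left_to_right right_box_iff kill_kernel_outside_left shift_left_left_box)
  qed
  ultimately show ?thesis by (simp add: sum_two_boxes)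
qed

lemma green_two_boxes_sym: "green_two_boxes N x y = green_two_boxes N y x"
  unfolding green_two_boxes_def using green_sym by metis

lemma delta_two_boxes:
  assumes "x \<in> two_boxes N" "y \<in> two_boxes N"
  shows "(if x = y \<and> y \<in> box_int N then 1 else 0) + (if shift_left N x = shift_left N y \<and> shift_left N y \<in> box_int N then 1 else 0)
      = (if x = y then 1 else (0::real))"
  using assms by (auto simp: two_boxes_def right_box_iff dest: shift_left_left_box) (metis shift_left_right(2))

lemma green_two_boxes_first_step:
  assumes x: "x \<in> two_boxes N" and y: "y \<in> two_boxes N"
  shows "green_two_boxes N x y = (if x = y then 1 else 0) + (\<Sum>z\<in>two_boxes N. kill_kernel (2 * N) x z * green_two_boxes N z y)"
proof -
  have "(\<Sum>z\<in>two_boxes N. kill_kernel (2 * N) x z * green_two_boxes N z y)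
     = (\<Sum>z\<in>two_boxes N. kill_kernel (2 * N) x z * green N z y) + (\<Sum>z\<in>two_boxes N. kill_kernel (2 * N) x z * green N (shift_left N z) (shift_left N y))"
    unfolding green_two_boxes_def by (simp add: distrib_left sum.distrib)
  also have "\<dots> = (green N x y - (if x = y \<and> y \<in> box_int N then 1 else 0))
       + (green N (shift_left N x) (shift_left N y) - (if shift_left N x = shift_left N y \<and> shift_left N y \<in> box_int N then 1 else 0))"
    unfolding kernel_green_left[OF x] kernel_green_right[OF x]
    using green_first_step[of N x y] green_first_step[of N "shift_left N x" "shift_left N y"] by simp
  finally show ?thesis using delta_two_boxes[OF x y] unfolding green_two_boxes_def by simp
qed

lemma green_two_boxes_last_step:
  assumes x: "x \<in> two_boxes N" and y: "y \<in> two_boxes N"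
  shows "green_two_boxes N x y = (if x = y then 1 else 0) + (\<Sum>z\<in>two_boxes N. green_two_boxes N x z * kill_kernel (2 * N) z y)"
  using green_two_boxes_first_step[OF y x] by (auto simp: green_two_boxes_sym[of N _ x] green_two_boxes_sym[of N y x] kill_kernel_sym[of _ _ y] mult.commute)

text \<open>The separator S = V_{2N}^o minus the two boxes, and the coefficients of the
  harmonic extension from S into the two boxes (one step into S after G on the boxes).\<close>

definition harmonic_coeff :: "nat \<Rightarrow> site \<Rightarrow> site \<Rightarrow> real" where
  "harmonic_coeff N x w = (\<Sum>a\<in>two_boxes N. green_two_boxes N x a * kill_kernel (2 * N) a w)"

definition separator :: "nat \<Rightarrow> site set" where "separator N = box_int (2 * N) - two_boxes N"

lemma separator_sub_box: "separator N \<subseteq> box (2 * N)"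
  using box_int_sub[of "2 * N"] by (auto simp: separator_def)

lemma two_boxes_sub_box: "two_boxes N \<subseteq> box (2 * N)"
  using box_int_sub[of "2 * N"] two_boxes_interior[of N] by auto

lemma finite_separator[simp]: "finite (separator N)"
  by (simp add: separator_def)

lemma green_decomposition:
  assumes x: "x \<in> two_boxes N" and y: "y \<in> two_boxes N"
  shows "green (2 * N) x y = green_two_boxes N x y
    + (\<Sum>w\<in>separator N. \<Sum>w'\<in>separator N. harmonic_coeff N x w * green (2 * N) w w' * harmonic_coeff N y w')"
proof -
  have "green (2 * N) x y = green_two_boxes N x y + (\<Sum>w\<in>separator N. \<Sum>w'\<in>separator N.
      harmonic_coeff N x w * green (2 * N) w w' * (\<Sum>b\<in>two_boxes N. kill_kernel (2 * N) w' b * green_two_boxes N b y))"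
    unfolding separator_def harmonic_coeff_def
  proof (rule schur_complement[OF finite_box_int two_boxes_interior _ _
        green_two_boxes_first_step green_two_boxes_last_step x y])
    show "green (2 * N) x y = (if x = y then 1 else 0) + (\<Sum>z\<in>box_int (2 * N). kill_kernel (2 * N) x z * green (2 * N) z y)"
      if "x \<in> two_boxes N" "y \<in> two_boxes N" for x y
      using green_first_step[of "2 * N" x y] that two_boxes_interior by auto
    show "green (2 * N) w y = (\<Sum>z\<in>box_int (2 * N). green (2 * N) w z * kill_kernel (2 * N) z y)"
      if "w \<in> box_int (2 * N) - two_boxes N" "y \<in> two_boxes N" for w y
      using green_last_step[of "2 * N" w y] that by auto
  qed
  also have "(\<lambda>w'. \<Sum>b\<in>two_boxes N. kill_kernel (2 * N) w' b * green_two_boxes N b y) = harmonic_coeff N y"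
    unfolding harmonic_coeff_def
    by (intro ext sum.cong refl) (metis green_two_boxes_sym kill_kernel_sym mult.commute)
  finally show ?thesis .
qed

lemma quadratic_form_swap:
  fixes a :: "'x \<Rightarrow> real" and f :: "'x \<Rightarrow> 'w \<Rightarrow> real" and g :: "'w \<Rightarrow> 'w \<Rightarrow> real"
  shows "(\<Sum>x\<in>A. \<Sum>y\<in>A. a x * a y * (\<Sum>w\<in>B. \<Sum>w'\<in>B. f x w * g w w' * f y w'))
       = (\<Sum>w\<in>B. \<Sum>w'\<in>B. (\<Sum>x\<in>A. a x * f x w) * (\<Sum>y\<in>A. a y * f y w') * g w w')"
proof -
  define T where "T x y w w' = a x * f x w * (a y * f y w') * g w w'" for x y w w'
  have "(\<Sum>x\<in>A. \<Sum>y\<in>A. a x * a y * (\<Sum>w\<in>B. \<Sum>w'\<in>B. f x w * g w w' * f y w'))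
      = (\<Sum>x\<in>A. \<Sum>y\<in>A. \<Sum>w\<in>B. \<Sum>w'\<in>B. T x y w w')"
    unfolding T_def by (simp add: sum_distrib_left mult_ac)
  also have "\<dots> = (\<Sum>x\<in>A. \<Sum>w\<in>B. \<Sum>y\<in>A. \<Sum>w'\<in>B. T x y w w')"
    by (intro sum.cong refl) (rule sum.swap)
  also have "\<dots> = (\<Sum>w\<in>B. \<Sum>x\<in>A. \<Sum>y\<in>A. \<Sum>w'\<in>B. T x y w w')"
    by (rule sum.swap)
  also have "\<dots> = (\<Sum>w\<in>B. \<Sum>x\<in>A. \<Sum>w'\<in>B. \<Sum>y\<in>A. T x y w w')"
    by (intro sum.cong refl) (rule sum.swap)
  also have "\<dots> = (\<Sum>w\<in>B. \<Sum>w'\<in>B. \<Sum>x\<in>A. \<Sum>y\<in>A. T x y w w')"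
    by (intro sum.cong refl) (rule sum.swap)
  also have "\<dots> = (\<Sum>w\<in>B. \<Sum>w'\<in>B. (\<Sum>x\<in>A. a x * f x w) * (\<Sum>y\<in>A. a y * f y w') * g w w')"
  proof (intro sum.cong refl)
    fix w w'
    have "(\<Sum>x\<in>A. a x * f x w) * (\<Sum>y\<in>A. a y * f y w') * g w w' = (\<Sum>x\<in>A. \<Sum>y\<in>A. a x * f x w * (a y * f y w')) * g w w'"
      by (simp only: sum_product)
    also have "\<dots> = (\<Sum>x\<in>A. \<Sum>y\<in>A. T x y w w')"
      unfolding T_def by (simp add: sum_distrib_right)
    finally show "(\<Sum>x\<in>A. \<Sum>y\<in>A. T x y w w') = (\<Sum>x\<in>A. a x * f x w) * (\<Sum>y\<in>A. a y * f y w') * g w w'" by simp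
  qed
  finally show ?thesis .
qed

lemma covariance_split:
  fixes t :: "site \<Rightarrow> real"
  shows "(\<Sum>x\<in>two_boxes N. \<Sum>y\<in>two_boxes N. t x * t y * green (2 * N) x y)
    = (\<Sum>a\<in>box_int N. \<Sum>b\<in>box_int N. t a * t b * green N a b)
    + (\<Sum>a\<in>box_int N. \<Sum>b\<in>box_int N. t (shift_right N a) * t (shift_right N b) * green N a b)
    + (\<Sum>w\<in>separator N. \<Sum>w'\<in>separator N. (\<Sum>x\<in>two_boxes N. t x * harmonic_coeff N x w) * (\<Sum>y\<in>two_boxes N. t y * harmonic_coeff N y w') * green (2 * N) w w')"
proof -
  have "(\<Sum>x\<in>two_boxes N. \<Sum>y\<in>two_boxes N. t x * t y * green (2 * N) x y)
     = (\<Sum>x\<in>two_boxes N. \<Sum>y\<in>two_boxes N. t x * t y * green N x y)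
     + (\<Sum>x\<in>two_boxes N. \<Sum>y\<in>two_boxes N. t x * t y * green N (shift_left N x) (shift_left N y))
     + (\<Sum>x\<in>two_boxes N. \<Sum>y\<in>two_boxes N. t x * t y * (\<Sum>w\<in>separator N. \<Sum>w'\<in>separator N. harmonic_coeff N x w * green (2 * N) w w' * harmonic_coeff N y w'))"
    by (simp add: green_decomposition green_two_boxes_def distrib_left sum.distrib cong: sum.cong)
  also have "(\<Sum>x\<in>two_boxes N. \<Sum>y\<in>two_boxes N. t x * t y * green N x y) = (\<Sum>a\<in>box_int N. \<Sum>b\<in>box_int N. t a * t b * green N a b)"
  proof -
    have "(\<Sum>x\<in>two_boxes N. \<Sum>y\<in>two_boxes N. t x * t y * green N x y) = (\<Sum>x\<in>two_boxes N. \<Sum>y\<in>box_int N. t x * t y * green N x y)"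
      by (intro sum.cong refl sum.mono_neutral_cong_right) (auto simp: two_boxes_def green_def)
    also have "\<dots> = (\<Sum>a\<in>box_int N. \<Sum>b\<in>box_int N. t a * t b * green N a b)"
      by (intro sum.mono_neutral_cong_right) (auto simp: two_boxes_def green_def intro!: sum.neutral)
    finally show ?thesis .
  qed
  also have "(\<Sum>x\<in>two_boxes N. \<Sum>y\<in>two_boxes N. t x * t y * green N (shift_left N x) (shift_left N y))
      = (\<Sum>a\<in>box_int N. \<Sum>b\<in>box_int N. t (shift_right N a) * t (shift_right N b) * green N a b)"
  proof -
    have "(\<Sum>x\<in>two_boxes N. \<Sum>y\<in>two_boxes N. t x * t y * green N (shift_left N x) (shift_left N y))
        = (\<Sum>x\<in>two_boxes N. \<Sum>y\<in>right_box N. t x * t y * green N (shift_left N x) (shift_left N y))"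
      by (intro sum.cong refl sum.mono_neutral_cong_right) (auto simp: two_boxes_def green_def right_box_iff)
    also have "\<dots> = (\<Sum>x\<in>right_box N. \<Sum>y\<in>right_box N. t x * t y * green N (shift_left N x) (shift_left N y))"
      by (intro sum.mono_neutral_cong_right) (auto simp: two_boxes_def green_def right_box_iff intro!: sum.neutral)
    also have "\<dots> = (\<Sum>a\<in>box_int N. \<Sum>b\<in>box_int N. t (shift_right N a) * t (shift_right N b) * green N a b)"
      by (simp add: sum_right_box)
    finally show ?thesis .
  qed
  also have "(\<Sum>x\<in>two_boxes N. \<Sum>y\<in>two_boxes N. t x * t y * (\<Sum>w\<in>separator N. \<Sum>w'\<in>separator N. harmonic_coeff N x w * green (2 * N) w w' * harmonic_coeff N y w'))
     = (\<Sum>w\<in>separator N. \<Sum>w'\<in>separator N. (\<Sum>x\<in>two_boxes N. t x * harmonic_coeff N x w) * (\<Sum>y\<in>two_boxes N. t y * harmonic_coeff N y w') * green (2 * N) w w')"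
    by (rule quadratic_form_swap)
  finally show ?thesis .
qed

lemma Max_abs_bound:
  fixes f :: "'b \<Rightarrow> real"
  assumes "finite A" "A \<noteq> {}"
  shows "\<bar>Max (f ` A)\<bar> \<le> (\<Sum>z\<in>A. \<bar>f z\<bar>)"
proof -
  have "Max (f ` A) \<in> f ` A" using assms by (intro Max_in) auto
  then obtain z0 where "z0 \<in> A" "Max (f ` A) = f z0" by auto
  then show ?thesis using assms by (metis (no_types, lifting) abs_ge_zero member_le_sum)
qed

lemma field_max_measurable:
  assumes "\<And>z. z \<in> box N \<Longrightarrow> X z \<in> borel_measurable M"
  shows "field_max N X \<in> borel_measurable M"
  unfolding field_max_def[abs_def] using assms by (intro borel_measurable_Max) auto

lemma box_ne: "box N \<noteq> {}" and origin_in_box: "(0,0) \<in> box N"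
  by (auto simp: box_def)

lemma field_max_integrable:
  assumes "\<And>z. z \<in> box N \<Longrightarrow> integrable M (X z)"
  shows "integrable M (field_max N X)"
proof (rule Bochner_Integration.integrable_bound)
  show "integrable M (\<lambda>\<omega>. \<Sum>z\<in>box N. \<bar>X z \<omega>\<bar>)" using assms by auto
  show "field_max N X \<in> borel_measurable M" using assms by (intro field_max_measurable) auto
  show "AE \<omega> in M. norm (field_max N X \<omega>) \<le> norm (\<Sum>z\<in>box N. \<bar>X z \<omega>\<bar>)"
    using Max_abs_bound[OF finite_box box_ne] by (auto simp: field_max_def)
qed

text \<open>max0 D v = max(0, max over D of v): the maximum of v over D together with an
  extra point where the value is 0.  Maxima over V_N are of this form, because
  the field vanishes on the boundary.\<close>

definition max0 :: "'i set \<Rightarrow> ('i \<Rightarrow> real) \<Rightarrow> real" where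
  "max0 D v = Max (insert 0 (v ` D))"

lemma max0_ge0: "finite D \<Longrightarrow> 0 \<le> max0 D v"
  unfolding max0_def by (rule Max_ge) auto

lemma max0_ge: "finite D \<Longrightarrow> x \<in> D \<Longrightarrow> v x \<le> max0 D v"
  unfolding max0_def by (rule Max_ge) auto

lemma max0_le: "finite D \<Longrightarrow> 0 \<le> c \<Longrightarrow> (\<And>x. x \<in> D \<Longrightarrow> v x \<le> c) \<Longrightarrow> max0 D v \<le> c"
  unfolding max0_def by (auto simp: Max_le_iff)

lemma max0_cong: "(\<And>x. x \<in> D \<Longrightarrow> v x = w x) \<Longrightarrow> max0 D v = max0 D w"
  unfolding max0_def by (intro arg_cong[where f=Max] arg_cong[where f="insert 0"] image_cong) auto

lemma max0_abs: "finite D \<Longrightarrow> \<bar>max0 D v\<bar> \<le> (\<Sum>x\<in>D. \<bar>v x\<bar>)"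
proof -
  assume D: "finite D"
  have "max0 D v \<le> (\<Sum>x\<in>D. \<bar>v x\<bar>)"
  proof (rule max0_le[OF D])
    show "0 \<le> (\<Sum>x\<in>D. \<bar>v x\<bar>)" by (simp add: sum_nonneg)
    fix x assume "x \<in> D"
    then have "\<bar>v x\<bar> \<le> (\<Sum>x\<in>D. \<bar>v x\<bar>)" using D by (intro member_le_sum) auto
    then show "v x \<le> (\<Sum>x\<in>D. \<bar>v x\<bar>)" by simp
  qed
  then show ?thesis using max0_ge0[OF D, of v] by simp
qed

lemma max0_meas:
  assumes "finite D" "\<And>z. z \<in> D \<Longrightarrow> U z \<in> borel_measurable M"
  shows "(\<lambda>\<omega>. max0 D (\<lambda>z. U z \<omega>)) \<in> borel_measurable M"
proof (cases "D = {}")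
  case True then show ?thesis by (simp add: max0_def)
next
  case False
  then have "max0 D (\<lambda>z. U z \<omega>) = max 0 (Max ((\<lambda>z. U z \<omega>) ` D))" for \<omega>
    unfolding max0_def using assms(1) by (subst Max_insert) auto
  moreover have "(\<lambda>\<omega>. max 0 (Max ((\<lambda>z. U z \<omega>) ` D))) \<in> borel_measurable M"
    using assms by (intro borel_measurable_max borel_measurable_Max) auto
  ultimately show ?thesis by simp
qed

lemma max0_meas_PiM:
  assumes "finite D"
  shows "max0 D \<in> borel_measurable (PiM D (\<lambda>_. borel))"
proof -
  have "(\<lambda>v. max0 D (\<lambda>z. v z)) \<in> borel_measurable (PiM D (\<lambda>_. borel))"
    using assms by (intro max0_meas) (auto intro: measurable_component_singleton)
  then show ?thesis by simp
qed

lemma max0_int: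
  assumes "finite D" "\<And>z. z \<in> D \<Longrightarrow> integrable M (U z)"
  shows "integrable M (\<lambda>\<omega>. max0 D (\<lambda>z. U z \<omega>))"
proof (rule Bochner_Integration.integrable_bound)
  show "integrable M (\<lambda>\<omega>. \<Sum>z\<in>D. \<bar>U z \<omega>\<bar>)" using assms by auto
  show "(\<lambda>\<omega>. max0 D (\<lambda>z. U z \<omega>)) \<in> borel_measurable M" using assms by (intro max0_meas) auto
  show "AE \<omega> in M. norm (max0 D (\<lambda>z. U z \<omega>)) \<le> norm (\<Sum>z\<in>D. \<bar>U z \<omega>\<bar>)"
    using max0_abs[OF assms(1)] by auto
qed

lemma max_boundary_zero:
  fixes v :: "site \<Rightarrow> real"
  assumes "\<forall>z\<in>box N - box_int N. v z = 0"
  shows "Max (v ` box N) = max0 (box_int N) v"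
proof -
  have "v ` box N = v ` box_int N \<union> v ` (box N - box_int N)"
    using box_int_sub[of N] by blast
  also have "v ` (box N - box_int N) = {0}"
  proof -
    have z: "(0,0) \<in> box N - box_int N" by (auto simp: box_def box_int_def)
    show ?thesis
    proof
      show "v ` (box N - box_int N) \<subseteq> {0}" using assms by auto
      show "{0} \<subseteq> v ` (box N - box_int N)" using z assms by (auto intro!: image_eqI[where x="(0,0)"])
    qed
  qed
  finally show ?thesis unfolding max0_def by simp
qed

lemma max0_two_boxes:
  fixes q1 q2 :: "site \<Rightarrow> real"
  shows "max0 (two_boxes N) (\<lambda>x. if x \<in> box_int N then q1 x else q2 (shift_left N x)) = max (max0 (box_int N) q1) (max0 (box_int N) q2)"
proof -
  have "(\<lambda>x. if x \<in> box_int N then q1 x else q2 (shift_left N x)) ` two_boxes N = q1 ` box_int N \<union> q2 ` box_int N"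
  proof -
    have "(\<lambda>x. if x \<in> box_int N then q1 x else q2 (shift_left N x)) ` box_int N = q1 ` box_int N" by auto
    moreover have "(\<lambda>x. if x \<in> box_int N then q1 x else q2 (shift_left N x)) ` right_box N = q2 ` box_int N"
    proof -
      have "(\<lambda>x. if x \<in> box_int N then q1 x else q2 (shift_left N x)) ` right_box N
          = (\<lambda>u. if shift_right N u \<in> box_int N then q1 (shift_right N u) else q2 (shift_left N (shift_right N u))) ` box_int N"
        unfolding right_box_def image_image ..
      also have "\<dots> = q2 ` box_int N"
      proof (intro image_cong refl)
        fix u assume "u \<in> box_int N"
        then have "shift_right N u \<in> right_box N" unfolding right_box_def by auto
        then show "(if shift_right N u \<in> box_int N then q1 (shift_right N u) else q2 (shift_left N (shift_right N u))) = q2 u"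
          using right_box_not_left by auto
      qed
      finally show ?thesis .
    qed
    ultimately show ?thesis unfolding two_boxes_def image_Un by (simp only:)
  qed
  then have E: "insert 0 ((\<lambda>x. if x \<in> box_int N then q1 x else q2 (shift_left N x)) ` two_boxes N) = insert 0 (q1 ` box_int N) \<union> insert 0 (q2 ` box_int N)"
    by auto
  have M: "Max (insert 0 (q1 ` box_int N) \<union> insert 0 (q2 ` box_int N)) = max (Max (insert 0 (q1 ` box_int N))) (Max (insert 0 (q2 ` box_int N)))"
    by (rule Max_Un) auto
  show ?thesis unfolding max0_def E by (rule M)
qed

section \<open>The Gibbs-Markov coupling and the comparison of expected maxima\<close>

text \<open>Two independent copies of an N-field, placed on the left and the right box:
  the field is indexed by sites of V_{2N} and the sample point is a pair.\<close>

definition split_field :: "nat \<Rightarrow> (site \<Rightarrow> 'a \<Rightarrow> real) \<Rightarrow> site \<Rightarrow> 'a \<times> 'a \<Rightarrow> real" where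
  "split_field N Y x q = (if x \<in> box_int N then Y x (fst q) else Y (shift_left N x) (snd q))"

definition harmonic_part :: "nat \<Rightarrow> (site \<Rightarrow> 'b \<Rightarrow> real) \<Rightarrow> site \<Rightarrow> 'b \<Rightarrow> real" where
  "harmonic_part N Z x \<omega> = (\<Sum>w\<in>separator N. harmonic_coeff N x w * Z w \<omega>)"

lemma split_field_integrable:
  assumes c: "centered_gaussian_field P (box N) Y (green N)" and x: "x \<in> two_boxes N"
  shows "integrable (P \<Otimes>\<^sub>M P) (split_field N Y x)"
proof -
  have P: "prob_space P" by (rule cgf_prob_space[OF c])
  have Yi: "integrable P (Y z)" if "z \<in> box_int N" for z
    using cgf_coord_props(1)[OF c finite_box subsetD[OF box_int_sub that]] .
  show ?thesis
  proof (cases "x \<in> box_int N")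
    case True
    then show ?thesis
      unfolding split_field_def[abs_def] using integral_pair_fst(1)[OF P P Yi[OF True]] by simp
  next
    case False
    then show ?thesis
      unfolding split_field_def[abs_def] using shift_left_right_box[OF x False]
        integral_pair_snd(1)[OF P P Yi[of "shift_left N x"]] by simp
  qed
qed

lemma harmonic_part_integrable:
  assumes c: "centered_gaussian_field P (box (2 * N)) Z (green (2 * N))"
  shows "integrable P (harmonic_part N Z x)" and "integral\<^sup>L P (harmonic_part N Z x) = 0"
proof -
  have Zi: "integrable P (Z w)" and Ze: "integral\<^sup>L P (Z w) = 0" if "w \<in> separator N" for w
    using cgf_coord_props[OF c finite_box] separator_sub_box that by blast+
  show "integrable P (harmonic_part N Z x)"
    unfolding harmonic_part_def[abs_def] using Zi by auto
  have "integral\<^sup>L P (harmonic_part N Z x)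
      = (\<Sum>w\<in>separator N. integral\<^sup>L P (\<lambda>\<omega>. harmonic_coeff N x w * Z w \<omega>))"
    unfolding harmonic_part_def[abs_def] using Zi by (intro Bochner_Integration.integral_sum) auto
  also have "\<dots> = 0" using Ze by simp
  finally show "integral\<^sup>L P (harmonic_part N Z x) = 0" .
qed

lemma coupled_field_linear_split:
  "(\<Sum>x\<in>two_boxes N. t x * (split_field N Y x q + harmonic_part N Z x \<omega>))
     = ((\<Sum>x\<in>box_int N. t x * Y x (fst q)) + (\<Sum>a\<in>box_int N. t (shift_right N a) * Y a (snd q)))
       + (\<Sum>w\<in>separator N. (\<Sum>x\<in>two_boxes N. t x * harmonic_coeff N x w) * Z w \<omega>)"
proof -
  have "(\<Sum>x\<in>two_boxes N. t x * split_field N Y x q)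
      = (\<Sum>x\<in>box_int N. t x * split_field N Y x q) + (\<Sum>x\<in>right_box N. t x * split_field N Y x q)"
    by (rule sum_two_boxes)
  also have "(\<Sum>x\<in>box_int N. t x * split_field N Y x q) = (\<Sum>x\<in>box_int N. t x * Y x (fst q))"
    unfolding split_field_def by simp
  also have "(\<Sum>x\<in>right_box N. t x * split_field N Y x q) = (\<Sum>a\<in>box_int N. t (shift_right N a) * Y a (snd q))"
    unfolding split_field_def sum_right_box by (intro sum.cong refl) (auto simp: shift_right_not_left_box)
  finally have left_right: "(\<Sum>x\<in>two_boxes N. t x * split_field N Y x q)
      = (\<Sum>x\<in>box_int N. t x * Y x (fst q)) + (\<Sum>a\<in>box_int N. t (shift_right N a) * Y a (snd q))" .
  have "(\<Sum>x\<in>two_boxes N. t x * harmonic_part N Z x \<omega>)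
      = (\<Sum>x\<in>two_boxes N. \<Sum>w\<in>separator N. t x * harmonic_coeff N x w * Z w \<omega>)"
    unfolding harmonic_part_def by (simp add: sum_distrib_left mult.assoc)
  also have "\<dots> = (\<Sum>w\<in>separator N. (\<Sum>x\<in>two_boxes N. t x * harmonic_coeff N x w) * Z w \<omega>)"
    by (subst sum.swap) (simp add: sum_distrib_right)
  finally show ?thesis
    using left_right by (simp add: distrib_left sum.distrib)
qed

lemma exp_sum3: "complex_of_real (exp (- a / 2)) * complex_of_real (exp (- b / 2)) * complex_of_real (exp (- c / 2))
    = complex_of_real (exp (- (a + b + c) / 2))"
proof -
  have "exp (- a / 2) * exp (- b / 2) * exp (- c / 2) = exp (- (a + b + c) / 2)"
    by (simp add: exp_add[symmetric] field_simps)
  then show ?thesis by (simp only: of_real_mult[symmetric])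
qed

text \<open>The coupled field has the characteristic function of the 2N-field on the two
  boxes: this is the Gibbs-Markov property in Fourier form, a consequence of the
  covariance splitting.\<close>

lemma char_coupled_field:
  assumes cY: "centered_gaussian_field P (box N) Y (green N)"
    and cZ: "centered_gaussian_field Q (box (2 * N)) Z (green (2 * N))"
  shows "(CLINT \<omega>|(P \<Otimes>\<^sub>M P) \<Otimes>\<^sub>M Q.
            iexp (\<Sum>x\<in>two_boxes N. t x * (split_field N Y x (fst \<omega>) + harmonic_part N Z x (snd \<omega>))))
     = complex_of_real (exp (- (\<Sum>x\<in>two_boxes N. \<Sum>y\<in>two_boxes N. t x * t y * green (2 * N) x y) / 2))"
proof -
  have P: "prob_space P" and Q: "prob_space Q" using cgf_prob_space cY cZ by blast+
  have [measurable]: "Y z \<in> borel_measurable P" if "z \<in> box_int N" for z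
    using cgf_measurable[OF cY] box_int_sub that by blast
  have [measurable]: "Z w \<in> borel_measurable Q" if "w \<in> separator N" for w
    using cgf_measurable[OF cZ] separator_sub_box that by blast
  define u where "u w = (\<Sum>x\<in>two_boxes N. t x * harmonic_coeff N x w)" for w
  define left where "left \<omega> = (\<Sum>x\<in>box_int N. t x * Y x \<omega>)" for \<omega>
  define right where "right \<omega> = (\<Sum>a\<in>box_int N. t (shift_right N a) * Y a \<omega>)" for \<omega>
  define sep where "sep \<omega> = (\<Sum>w\<in>separator N. u w * Z w \<omega>)" for \<omega>
  have [measurable]: "left \<in> borel_measurable P" "right \<in> borel_measurable P" "sep \<in> borel_measurable Q"
    unfolding left_def[abs_def] right_def[abs_def] sep_def[abs_def] by measurable
  have "(CLINT \<omega>|(P \<Otimes>\<^sub>M P) \<Otimes>\<^sub>M Q.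
            iexp (\<Sum>x\<in>two_boxes N. t x * (split_field N Y x (fst \<omega>) + harmonic_part N Z x (snd \<omega>))))
      = (CLINT \<omega>|(P \<Otimes>\<^sub>M P) \<Otimes>\<^sub>M Q. iexp ((\<lambda>q. left (fst q) + right (snd q)) (fst \<omega>) + sep (snd \<omega>)))"
    unfolding coupled_field_linear_split left_def right_def sep_def u_def by simp
  also have "\<dots> = (CLINT q|P \<Otimes>\<^sub>M P. iexp (left (fst q) + right (snd q))) * (CLINT \<omega>|Q. iexp (sep \<omega>))"
    by (rule char_pair_product[OF prob_space_pair[OF P P] Q]) measurable
  also have "(CLINT q|P \<Otimes>\<^sub>M P. iexp (left (fst q) + right (snd q)))
      = (CLINT \<omega>|P. iexp (left \<omega>)) * (CLINT \<omega>|P. iexp (right \<omega>))"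
    by (rule char_pair_product[OF P P]) measurable
  also have "(CLINT \<omega>|P. iexp (left \<omega>))
      = complex_of_real (exp (- (\<Sum>a\<in>box_int N. \<Sum>b\<in>box_int N. t a * t b * green N a b) / 2))"
    unfolding left_def by (rule cgf_char_restrict[OF cY finite_box box_int_sub])
  also have "(CLINT \<omega>|P. iexp (right \<omega>)) = complex_of_real (exp (- (\<Sum>a\<in>box_int N. \<Sum>b\<in>box_int N.
      t (shift_right N a) * t (shift_right N b) * green N a b) / 2))"
    unfolding right_def by (rule cgf_char_restrict[OF cY finite_box box_int_sub])
  also have "(CLINT \<omega>|Q. iexp (sep \<omega>)) = complex_of_real (exp (- (\<Sum>w\<in>separator N.
      \<Sum>w'\<in>separator N. u w * u w' * green (2 * N) w w') / 2))"
    unfolding sep_def by (rule cgf_char_restrict[OF cZ finite_box separator_sub_box])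
  finally show ?thesis
    unfolding covariance_split u_def[symmetric] exp_sum3 .
qed

lemma gibbs_markov_law:
  assumes cY: "centered_gaussian_field P (box N) Y (green N)"
    and cZ: "centered_gaussian_field Q (box (2 * N)) Z (green (2 * N))"
  shows "distr Q (PiM (two_boxes N) (\<lambda>_. borel)) (\<lambda>\<omega>. \<lambda>z\<in>two_boxes N. Z z \<omega>)
    = distr ((P \<Otimes>\<^sub>M P) \<Otimes>\<^sub>M Q) (PiM (two_boxes N) (\<lambda>_. borel))
        (\<lambda>\<omega>. \<lambda>z\<in>two_boxes N. split_field N Y z (fst \<omega>) + harmonic_part N Z z (snd \<omega>))"
proof (rule joint_law_eq_of_char_eq[OF finite_two_boxes])
  have P: "prob_space P" and Q: "prob_space Q" using cgf_prob_space cY cZ by blast+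
  show "prob_space Q" "prob_space ((P \<Otimes>\<^sub>M P) \<Otimes>\<^sub>M Q)"
    using P Q by (auto intro: prob_space_pair)
  show "Z z \<in> borel_measurable Q" if "z \<in> two_boxes N" for z
    using cgf_measurable[OF cZ] two_boxes_sub_box that by blast
  show "(\<lambda>\<omega>. split_field N Y z (fst \<omega>) + harmonic_part N Z z (snd \<omega>))
      \<in> borel_measurable ((P \<Otimes>\<^sub>M P) \<Otimes>\<^sub>M Q)" if "z \<in> two_boxes N" for z
    using integral_pair_fst(1)[OF prob_space_pair[OF P P] Q split_field_integrable[OF cY that]]
      integral_pair_snd(1)[OF prob_space_pair[OF P P] Q harmonic_part_integrable(1)[OF cZ]] by auto
  show "(CLINT \<omega>|Q. iexp (\<Sum>z\<in>two_boxes N. t z * Z z \<omega>))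
      = (CLINT \<omega>|(P \<Otimes>\<^sub>M P) \<Otimes>\<^sub>M Q.
           iexp (\<Sum>z\<in>two_boxes N. t z * (split_field N Y z (fst \<omega>) + harmonic_part N Z z (snd \<omega>))))" for t
    unfolding char_coupled_field[OF cY cZ]
    by (rule cgf_char_restrict[OF cZ finite_box two_boxes_sub_box])
qed

lemma integral_max0_eq_of_law_eq:
  fixes U :: "'i \<Rightarrow> 'a \<Rightarrow> real" and V :: "'i \<Rightarrow> 'b \<Rightarrow> real"
  assumes D: "finite D"
    and U: "\<And>z. z \<in> D \<Longrightarrow> U z \<in> borel_measurable P" and V: "\<And>z. z \<in> D \<Longrightarrow> V z \<in> borel_measurable Q"
    and law: "distr P (PiM D (\<lambda>_. borel)) (\<lambda>\<omega>. \<lambda>z\<in>D. U z \<omega>) = distr Q (PiM D (\<lambda>_. borel)) (\<lambda>\<omega>. \<lambda>z\<in>D. V z \<omega>)"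
  shows "(\<integral>\<omega>. max0 D (\<lambda>z. U z \<omega>) \<partial>P) = (\<integral>\<omega>. max0 D (\<lambda>z. V z \<omega>) \<partial>Q)"
proof -
  have "(\<integral>\<omega>. max0 D (\<lambda>z. U z \<omega>) \<partial>P) = (\<integral>\<omega>. max0 D (\<lambda>z\<in>D. U z \<omega>) \<partial>P)"
    by (intro Bochner_Integration.integral_cong refl max0_cong) auto
  also have "\<dots> = (\<integral>v. max0 D v \<partial>distr P (PiM D (\<lambda>_. borel)) (\<lambda>\<omega>. \<lambda>z\<in>D. U z \<omega>))"
    using U by (intro integral_distr[symmetric] max0_meas_PiM D measurable_restrict) auto
  also have "\<dots> = (\<integral>\<omega>. max0 D (\<lambda>z\<in>D. V z \<omega>) \<partial>Q)"
    unfolding law using V by (intro integral_distr max0_meas_PiM D measurable_restrict) auto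
  also have "\<dots> = (\<integral>\<omega>. max0 D (\<lambda>z. V z \<omega>) \<partial>Q)"
    by (intro Bochner_Integration.integral_cong refl max0_cong) auto
  finally show ?thesis .
qed

text \<open>Jensen's inequality for max0: adding an independent mean-zero perturbation
  can only increase the expected maximum.\<close>

lemma max0_le_independent_perturbation:
  fixes W :: "'i \<Rightarrow> 'a \<Rightarrow> real" and h :: "'i \<Rightarrow> 'b \<Rightarrow> real"
  assumes P: "prob_space P" and Q: "prob_space Q" and D: "finite D"
    and W: "\<And>x. x \<in> D \<Longrightarrow> integrable P (W x)"
    and h: "\<And>x. x \<in> D \<Longrightarrow> integrable Q (h x)" and h0: "\<And>x. x \<in> D \<Longrightarrow> integral\<^sup>L Q (h x) = 0"
  shows "(\<integral>q. max0 D (\<lambda>z. W z q) \<partial>P) \<le> (\<integral>\<omega>. max0 D (\<lambda>z. W z (fst \<omega>) + h z (snd \<omega>)) \<partial>(P \<Otimes>\<^sub>M Q))"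
proof -
  interpret pair_prob_space P Q using P Q by (rule pair_prob_spaceI)
  have Vi: "integrable (P \<Otimes>\<^sub>M Q) (\<lambda>\<omega>. max0 D (\<lambda>z. W z (fst \<omega>) + h z (snd \<omega>)))"
    using integral_pair_fst(1)[OF P Q W] integral_pair_snd(1)[OF P Q h] by (intro max0_int D) auto
  have "(\<integral>q. max0 D (\<lambda>z. W z q) \<partial>P) \<le> (\<integral>q. (\<integral>\<omega>. max0 D (\<lambda>z. W z q + h z \<omega>) \<partial>Q) \<partial>P)"
  proof (rule integral_mono)
    show "integrable P (\<lambda>q. max0 D (\<lambda>z. W z q))" using W by (rule max0_int[OF D])
    show "integrable P (\<lambda>q. \<integral>\<omega>. max0 D (\<lambda>z. W z q + h z \<omega>) \<partial>Q)"
      using integrable_fst'[OF Vi] by simp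
    fix q
    show "max0 D (\<lambda>z. W z q) \<le> (\<integral>\<omega>. max0 D (\<lambda>z. W z q + h z \<omega>) \<partial>Q)"
    proof (rule max0_le[OF D])
      show "0 \<le> (\<integral>\<omega>. max0 D (\<lambda>z. W z q + h z \<omega>) \<partial>Q)"
        by (intro Bochner_Integration.integral_nonneg max0_ge0 D)
      fix x assume x: "x \<in> D"
      have "W x q = (\<integral>\<omega>. W x q + h x \<omega> \<partial>Q)"
        using h[OF x] h0[OF x] by (simp add: M2.prob_space)
      also have "\<dots> \<le> (\<integral>\<omega>. max0 D (\<lambda>z. W z q + h z \<omega>) \<partial>Q)"
      proof (rule integral_mono)
        show "integrable Q (\<lambda>\<omega>. W x q + h x \<omega>)" using h[OF x] by simp
        show "integrable Q (\<lambda>\<omega>. max0 D (\<lambda>z. W z q + h z \<omega>))" using h by (intro max0_int D) simp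
      qed (rule max0_ge[OF D x])
      finally show "W x q \<le> (\<integral>\<omega>. max0 D (\<lambda>z. W z q + h z \<omega>) \<partial>Q)" .
    qed
  qed
  also have "\<dots> = (\<integral>\<omega>. max0 D (\<lambda>z. W z (fst \<omega>) + h z (snd \<omega>)) \<partial>(P \<Otimes>\<^sub>M Q))"
    using integral_fst'[OF Vi] by simp
  finally show ?thesis .
qed

text \<open>The positive part of the maximum over the two boxes is dominated by the
  maximum over V_{2N}, since the field vanishes at the boundary point (0,0).\<close>

lemma max0_two_boxes_le_field_max:
  assumes c: "centered_gaussian_field P (box (2 * N)) Z (green (2 * N))"
  shows "(\<integral>\<omega>. max0 (two_boxes N) (\<lambda>z. Z z \<omega>) \<partial>P) \<le> integral\<^sup>L P (field_max (2 * N) Z)"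
proof (rule integral_mono_AE)
  have Zi: "integrable P (Z z)" if "z \<in> box (2 * N)" for z
    using cgf_coord_props(1)[OF c finite_box that] .
  show "integrable P (\<lambda>\<omega>. max0 (two_boxes N) (\<lambda>z. Z z \<omega>))"
    using two_boxes_sub_box Zi by (intro max0_int finite_two_boxes) auto
  show "integrable P (field_max (2 * N) Z)"
    using Zi by (rule field_max_integrable)
  have "green (2 * N) (0,0) (0,0) = 0" by (simp add: green_def box_int_def)
  then have "AE \<omega> in P. Z (0,0) \<omega> = 0"
    by (rule cgf_coord_props(3)[OF c finite_box origin_in_box])
  then show "AE \<omega> in P. max0 (two_boxes N) (\<lambda>z. Z z \<omega>) \<le> field_max (2 * N) Z \<omega>"
  proof eventually_elim
    case (elim \<omega>)
    have le_max: "Z z \<omega> \<le> field_max (2 * N) Z \<omega>" if "z \<in> box (2 * N)" for z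
      unfolding field_max_def using that by (intro Max_ge) auto
    show ?case
      using le_max[OF origin_in_box] le_max two_boxes_sub_box elim
      by (intro max0_le finite_two_boxes) auto
  qed
qed

text \<open>The maximum of two independent copies of X*_N is max0 of the split field,
  because the field vanishes almost surely on the boundary of V_N.\<close>

lemma max_pair_eq_max0_split_field:
  assumes c: "centered_gaussian_field P (box N) Y (green N)"
  shows "(\<integral>q. max (field_max N Y (fst q)) (field_max N Y (snd q)) \<partial>(P \<Otimes>\<^sub>M P))
       = (\<integral>q. max0 (two_boxes N) (\<lambda>z. split_field N Y z q) \<partial>(P \<Otimes>\<^sub>M P))"
proof (rule integral_cong_AE)
  have P: "prob_space P" by (rule cgf_prob_space[OF c])
  interpret pair_prob_space P P using P P by (rule pair_prob_spaceI)
  have Ym[measurable]: "Y z \<in> borel_measurable P" if "z \<in> box N" for z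
    using cgf_measurable[OF c that] .
  have "field_max N Y \<in> borel_measurable P" by (rule field_max_measurable) (rule Ym)
  then show "(\<lambda>q. max (field_max N Y (fst q)) (field_max N Y (snd q))) \<in> borel_measurable (P \<Otimes>\<^sub>M P)"
    by measurable
  show "(\<lambda>q. max0 (two_boxes N) (\<lambda>z. split_field N Y z q)) \<in> borel_measurable (P \<Otimes>\<^sub>M P)"
    using split_field_integrable[OF c] by (intro max0_meas finite_two_boxes) auto
  define on_boundary_zero where "on_boundary_zero \<omega> \<longleftrightarrow> (\<forall>z\<in>box N - box_int N. Y z \<omega> = 0)" for \<omega>
  have "AE \<omega> in P. on_boundary_zero \<omega>"
    unfolding on_boundary_zero_def
    using cgf_coord_props(3)[OF c finite_box] by (subst AE_finite_all) (auto simp: green_def)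
  moreover have "{\<omega> \<in> space P. on_boundary_zero \<omega>} \<in> sets P"
    unfolding on_boundary_zero_def by measurable
  ultimately have "AE q in P \<Otimes>\<^sub>M P. on_boundary_zero (fst q) \<and> on_boundary_zero (snd q)"
    by (intro AE_pair_measure) (auto simp: space_pair_measure elim: AE_mp)
  then show "AE q in P \<Otimes>\<^sub>M P.
      max (field_max N Y (fst q)) (field_max N Y (snd q)) = max0 (two_boxes N) (\<lambda>z. split_field N Y z q)"
  proof eventually_elim
    case (elim q)
    then have "field_max N Y (fst q) = max0 (box_int N) (\<lambda>z. Y z (fst q))"
      and "field_max N Y (snd q) = max0 (box_int N) (\<lambda>z. Y z (snd q))"
      unfolding field_max_def on_boundary_zero_def by (simp_all add: max_boundary_zero)
    then show ?case
      using max0_two_boxes[of N "\<lambda>z. Y z (fst q)" "\<lambda>z. Y z (snd q)"] unfolding split_field_def by simp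
  qed
qed

lemma max_pair_le_doubled_max:
  assumes cY: "centered_gaussian_field P (box N) Y (green N)"
    and cZ: "centered_gaussian_field Q (box (2 * N)) Z (green (2 * N))"
  shows "(\<integral>q. max (field_max N Y (fst q)) (field_max N Y (snd q)) \<partial>(P \<Otimes>\<^sub>M P))
     \<le> integral\<^sup>L Q (field_max (2 * N) Z)"
proof -
  have P: "prob_space P" and Q: "prob_space Q" using cgf_prob_space cY cZ by blast+
  have "(\<integral>q. max (field_max N Y (fst q)) (field_max N Y (snd q)) \<partial>(P \<Otimes>\<^sub>M P))
      = (\<integral>q. max0 (two_boxes N) (\<lambda>z. split_field N Y z q) \<partial>(P \<Otimes>\<^sub>M P))"
    by (rule max_pair_eq_max0_split_field[OF cY])
  also have "\<dots> \<le> (\<integral>\<omega>. max0 (two_boxes N) (\<lambda>z. split_field N Y z (fst \<omega>) + harmonic_part N Z z (snd \<omega>))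
      \<partial>((P \<Otimes>\<^sub>M P) \<Otimes>\<^sub>M Q))"
    using split_field_integrable[OF cY] harmonic_part_integrable[OF cZ]
    by (intro max0_le_independent_perturbation prob_space_pair P Q finite_two_boxes)
  also have "\<dots> = (\<integral>\<omega>. max0 (two_boxes N) (\<lambda>z. Z z \<omega>) \<partial>Q)"
    using split_field_integrable[OF cY] harmonic_part_integrable(1)[OF cZ] gibbs_markov_law[OF cY cZ]
      cgf_measurable[OF cZ] two_boxes_sub_box
      integral_pair_fst(1)[OF prob_space_pair[OF P P] Q] integral_pair_snd(1)[OF prob_space_pair[OF P P] Q]
    by (intro integral_max0_eq_of_law_eq[symmetric] finite_two_boxes) (auto simp: subset_iff)
  also have "\<dots> \<le> integral\<^sup>L Q (field_max (2 * N) Z)"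
    by (rule max0_two_boxes_le_field_max[OF cZ])
  finally show ?thesis .
qed

section \<open>From the doubling inequality to tightness\<close>

text \<open>Since max(a,b) = (a + b + |a - b|)/2, a bound E max(Y,Y') \<le> E Y + C for an
  independent copy Y' gives E|Y - Y'| \<le> 2C, and by Jensen E|Y - E Y| \<le> 2C.\<close>

lemma abs_deviation_le_of_max_pair:
  fixes Y :: "'a \<Rightarrow> real"
  assumes P: "prob_space P" and Y: "integrable P Y"
    and H: "(\<integral>q. max (Y (fst q)) (Y (snd q)) \<partial>(P \<Otimes>\<^sub>M P)) \<le> integral\<^sup>L P Y + C"
  shows "(\<integral>\<omega>. \<bar>Y \<omega> - integral\<^sup>L P Y\<bar> \<partial>P) \<le> 2 * C"
proof -
  interpret pair_prob_space P P using P P by (rule pair_prob_spaceI)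
  interpret PP: prob_space "P \<Otimes>\<^sub>M P" by (intro prob_space_pair P)
  note F = integral_pair_fst[OF P P Y] and S = integral_pair_snd[OF P P Y]
  have ID: "integrable (P \<Otimes>\<^sub>M P) (\<lambda>q. \<bar>Y (fst q) - Y (snd q)\<bar>)"
    using F S by auto
  have "(\<integral>q. max (Y (fst q)) (Y (snd q)) \<partial>(P \<Otimes>\<^sub>M P))
      = (\<integral>q. (Y (fst q) + Y (snd q) + \<bar>Y (fst q) - Y (snd q)\<bar>) / 2 \<partial>(P \<Otimes>\<^sub>M P))"
    by (intro Bochner_Integration.integral_cong refl) (simp add: max_def)
  also have "\<dots> = (integral\<^sup>L P Y + integral\<^sup>L P Y + (\<integral>q. \<bar>Y (fst q) - Y (snd q)\<bar> \<partial>(P \<Otimes>\<^sub>M P))) / 2"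
    using F S ID by (simp add: integral_add)
  finally have D: "(\<integral>q. \<bar>Y (fst q) - Y (snd q)\<bar> \<partial>(P \<Otimes>\<^sub>M P)) \<le> 2 * C" using H by simp
  have "(\<integral>\<omega>. \<bar>Y \<omega> - integral\<^sup>L P Y\<bar> \<partial>P) \<le> (\<integral>x. (\<integral>y. \<bar>Y (fst (x,y)) - Y (snd (x,y))\<bar> \<partial>P) \<partial>P)"
  proof (rule integral_mono)
    show "integrable P (\<lambda>\<omega>. \<bar>Y \<omega> - integral\<^sup>L P Y\<bar>)" using Y by auto
    show "integrable P (\<lambda>x. \<integral>y. \<bar>Y (fst (x, y)) - Y (snd (x, y))\<bar> \<partial>P)"
      using integrable_fst'[OF ID] by simp
    fix x assume "x \<in> space P"
    have "\<bar>Y x - integral\<^sup>L P Y\<bar> = \<bar>\<integral>y. Y x - Y y \<partial>P\<bar>"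
      using Y by (simp add: M1.prob_space)
    also have "\<dots> \<le> (\<integral>y. \<bar>Y x - Y y\<bar> \<partial>P)"
      by (rule integral_abs_bound)
    finally show "\<bar>Y x - integral\<^sup>L P Y\<bar> \<le> (\<integral>y. \<bar>Y (fst (x, y)) - Y (snd (x, y))\<bar> \<partial>P)" by simp
  qed
  also have "\<dots> = (\<integral>q. \<bar>Y (fst q) - Y (snd q)\<bar> \<partial>(P \<Otimes>\<^sub>M P))"
    using integral_fst'[OF ID] by simp
  finally show ?thesis using D by simp
qed

lemma prob_interval_ge_markov:
  fixes Z :: "'a \<Rightarrow> real"
  assumes P: "prob_space P" and Z: "integrable P Z" and a: "0 < a"
  shows "1 - (\<integral>\<omega>. \<bar>Z \<omega>\<bar> \<partial>P) / a \<le> measure (distr P borel Z) {-a<..a}"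
proof -
  interpret prob_space P by fact
  have [measurable]: "Z \<in> borel_measurable P" using Z by auto
  let ?far = "{\<omega>\<in>space P. a \<le> \<bar>Z \<omega>\<bar>}"
  have "prob ?far \<le> (\<integral>\<omega>. \<bar>Z \<omega>\<bar> \<partial>P) / a"
    using Z a by (intro integral_Markov_inequality_measure) auto
  moreover have "prob (space P - ?far) = 1 - prob ?far"
    by (rule prob_compl) measurable
  moreover have "prob (space P - ?far) \<le> prob (Z -` {-a<..a} \<inter> space P)"
    by (rule finite_measure_mono) auto
  ultimately show ?thesis
    by (subst measure_distr) auto
qed

lemma tight_of_bounded_abs_deviation:
  fixes Y :: "nat \<Rightarrow> 'a \<Rightarrow> real"
  assumes P: "\<And>n. prob_space (P n)" and Y: "\<And>n. integrable (P n) (Y n)"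
    and B: "\<And>n. (\<integral>\<omega>. \<bar>Y n \<omega> - integral\<^sup>L (P n) (Y n)\<bar> \<partial>P n) \<le> B"
  shows "tight (\<lambda>n. distr (P n) borel (\<lambda>\<omega>. Y n \<omega> - integral\<^sup>L (P n) (Y n)))"
  unfolding tight_def
proof (intro conjI allI impI)
  fix n
  interpret prob_space "P n" by fact
  show "real_distribution (distr (P n) borel (\<lambda>\<omega>. Y n \<omega> - integral\<^sup>L (P n) (Y n)))"
    using Y[of n] by (intro real_distribution_distr) auto
next
  fix \<epsilon> :: real assume e: "\<epsilon> > 0"
  have "0 \<le> (\<integral>\<omega>. \<bar>Y 0 \<omega> - integral\<^sup>L (P 0) (Y 0)\<bar> \<partial>P 0)" by simp
  then have B0: "0 \<le> B" using B[of 0] by linarith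
  define a where "a = B / \<epsilon> + 1"
  have a0: "0 < a" unfolding a_def using B0 e by (simp add: add_nonneg_pos)
  have Ba: "B / a < \<epsilon>"
    using B0 e a0 unfolding a_def by (simp add: field_simps)
  show "\<exists>a b. a < b \<and> (\<forall>n. 1 - \<epsilon> < measure (distr (P n) borel (\<lambda>\<omega>. Y n \<omega> - integral\<^sup>L (P n) (Y n))) {a<..b})"
  proof (intro exI conjI allI)
    show "-a < a" using a0 by simp
    fix n
    interpret prob_space "P n" by fact
    have "1 - \<epsilon> < 1 - B / a" using Ba by simp
    also have "\<dots> \<le> 1 - (\<integral>\<omega>. \<bar>Y n \<omega> - integral\<^sup>L (P n) (Y n)\<bar> \<partial>P n) / a"
      using B[of n] a0 by (simp add: divide_right_mono)
    also have "\<dots> \<le> measure (distr (P n) borel (\<lambda>\<omega>. Y n \<omega> - integral\<^sup>L (P n) (Y n))) {-a<..a}"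
      using Y[of n] by (intro prob_interval_ge_markov P a0) auto
    finally show "1 - \<epsilon> < measure (distr (P n) borel (\<lambda>\<omega>. Y n \<omega> - integral\<^sup>L (P n) (Y n))) {-a<..a}" .
  qed
qed

lemma abs_deviation_le_of_doubling:
  assumes cY: "centered_gaussian_field P (box N) Y (green N)"
    and cZ: "centered_gaussian_field Q (box (2 * N)) Z (green (2 * N))"
    and doubling: "integral\<^sup>L Q (field_max (2 * N) Z) \<le> integral\<^sup>L P (field_max N Y) + C"
  shows "(\<integral>\<omega>. \<bar>field_max N Y \<omega> - integral\<^sup>L P (field_max N Y)\<bar> \<partial>P) \<le> 2 * C"
proof (rule abs_deviation_le_of_max_pair)
  show "prob_space P" by (rule cgf_prob_space[OF cY])
  show "integrable P (field_max N Y)"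
    using cgf_coord_props(1)[OF cY finite_box] by (rule field_max_integrable)
  show "(\<integral>q. max (field_max N Y (fst q)) (field_max N Y (snd q)) \<partial>(P \<Otimes>\<^sub>M P))
      \<le> integral\<^sup>L P (field_max N Y) + C"
    using max_pair_le_doubled_max[OF cY cZ] doubling by linarith
qed

theorem mainTheorem6:
  fixes M :: "nat \<Rightarrow> 'a measure"
    and X :: "nat \<Rightarrow> site \<Rightarrow> 'a \<Rightarrow> real"
    and C :: real
  assumes gff: "\<And>N. N \<ge> 1 \<Longrightarrow> is_dgff (M N) N (X N)"
    and doubling: "\<And>N. N \<ge> 1 \<Longrightarrow>
        integral\<^sup>L (M (2 * N)) (field_max (2 * N) (X (2 * N)))
          \<le> integral\<^sup>L (M N) (field_max N (X N)) + C"
  shows "tight (\<lambda>n. distr (M (Suc n)) borel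
           (\<lambda>\<omega>. field_max (Suc n) (X (Suc n)) \<omega>
                  - integral\<^sup>L (M (Suc n)) (field_max (Suc n) (X (Suc n)))))"
proof (rule tight_of_bounded_abs_deviation)
  fix n
  have cY: "centered_gaussian_field (M (Suc n)) (box (Suc n)) (X (Suc n)) (green (Suc n))"
    using gff[of "Suc n"] by (simp add: is_dgff_def)
  have cZ: "centered_gaussian_field (M (2 * Suc n)) (box (2 * Suc n)) (X (2 * Suc n)) (green (2 * Suc n))"
    using gff[of "2 * Suc n"] by (simp add: is_dgff_def)
  show "prob_space (M (Suc n))" by (rule cgf_prob_space[OF cY])
  show "integrable (M (Suc n)) (field_max (Suc n) (X (Suc n)))"
    using cgf_coord_props(1)[OF cY finite_box] by (rule field_max_integrable)
  show "(\<integral>\<omega>. \<bar>field_max (Suc n) (X (Suc n)) \<omega> - integral\<^sup>L (M (Suc n)) (field_max (Suc n) (X (Suc n)))\<bar>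
      \<partial>M (Suc n)) \<le> 2 * C"
    using doubling[of "Suc n"] by (intro abs_deviation_le_of_doubling[OF cY cZ]) simp
qed

end
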